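(* Let $d\ge 2$, let $m>0$ be an integer and let $t\ge 2d+m-1$ be an integer. Then there exists a $t$-point set $T\subset\mathbb{R}^d$ that cannot be covered by any $m$-fan in $\mathbb{R}^d$, i.e., there are no $m$ hyperplanes (not necessarily distinct) all containing a common $(d-2)$-flat whose union contains $T$.
   Context: A $(d-2)$-flat is a $(d-2)$-dimensional affine subspace of $\mathbb{R}^d$. An $m$-fan is a set of $m$ hyperplanes in $\mathbb{R}^d$ passing through a common $(d-2)$-flat. *)

theory Defs
  imports "HOL-Analysis.Analysis"
begin

definition hyperplane :: "'a::euclidean_space set \<Rightarrow> bool" where
  "hyperplane H \<longleftrightarrow> (\<exists>a b. a \<noteq> 0 \<and> H = {x. a \<bullet> x = b})"

definition codim2_flat :: "'a::euclidean_space set \<Rightarrow> bool" where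
  "codim2_flat F \<longleftrightarrow> affine F \<and> aff_dim F = int DIM('a) - 2"

definition is_fan :: "nat \<Rightarrow> (nat \<Rightarrow> 'a::euclidean_space set) \<Rightarrow> bool" where
  "is_fan m H \<longleftrightarrow> (\<exists>F. codim2_flat F \<and> (\<forall>i<m. hyperplane (H i) \<and> F \<subseteq> H i))"

end

theory Submission
  imports Defs "HOL-Computational_Algebra.Polynomial"
begin

text \<open>
  We build an infinite sequence of points q j of \<real>^d such that any set of indices whose
  points are covered by an m-fan has at most m + 2d - 2 elements; any 2d + m - 1 of the
  points then form the required set.  Under the map x \<mapsto> (a1 \<bullet> x + c1, a2 \<bullet> x + c2) to the
  plane whose zero set is the (d-2)-flat of the fan, every hyperplane of the fan becomes a
  line through the origin.

  The sequence is built one coordinate at a time, the points of stage B lying in span B.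
  The new coordinate of the j-th point is h j = (\<Sum>p. \<Theta>_p j^(ix p)), a polynomial in j
  whose coefficient vector \<Theta> \<in> \<real>^(4d) is chosen outside a null set.  For any injective
  assignment J of indices to the basis vectors of \<real>^(4d) (nodes), the values of h at the nodes
  depend linearly and injectively on \<Theta> (Vandermonde).  Each way in which the lifted points
  could violate affine general position or the fan bound involves at most 4|B| + 2 indices and
  puts these values into the image of a lower-dimensional linear space under a smooth map.
  There are only countably many assignments J.
\<close>

lemma negligible_differentiable_image_subspace:
  fixes f :: "'m::euclidean_space \<Rightarrow> 'n::euclidean_space"
  assumes S: "subspace S" and dS: "dim S < DIM('n)" and df: "\<And>x. f differentiable (at x)"
  shows "negligible (f ` S)"
proof -
  have "dim S \<le> dim (UNIV::'n set)" using dS by simp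
  then obtain T :: "'n set" where T: "subspace T" "dim T = dim S"
    by (metis choose_subspace_of_subspace)
  then obtain g :: "'n \<Rightarrow> 'm" where g: "linear g" "g ` T = S" "inj_on g T"
    using subspace_isomorphism[OF T(1) S] by auto
  have negT: "negligible T" using negligible_lowdim T(2) dS by metis
  have "(f \<circ> g) differentiable_on T"
    unfolding differentiable_on_def
    by (metis differentiable_at_withinI differentiable_chain_at df g(1) linear_imp_differentiable)
  then have "negligible ((f \<circ> g) ` T)"
    by (rule negligible_differentiable_image_negligible[OF order_refl negT])
  moreover have "(f \<circ> g) ` T = f ` (g ` T)" by auto
  ultimately show ?thesis using g(2) by simp
qed

lemma negligible_linear_preimage:
  fixes L :: "'n::euclidean_space \<Rightarrow> 'n"
  assumes "linear L" "inj L" "negligible N" shows "negligible (L -` N)"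
proof -
  obtain g where g: "linear g" "g \<circ> L = id" using linear_injective_left_inverse assms by blast
  have sub: "L -` N \<subseteq> g ` N"
  proof
    fix x assume "x \<in> L -` N"
    moreover have "x = g (L x)" using g(2) by (metis comp_apply id_apply)
    ultimately show "x \<in> g ` N" by blast
  qed
  have "g differentiable_on N"
    by (simp add: differentiable_at_imp_differentiable_on g(1) linear_imp_differentiable)
  then have "negligible (g ` N)"
    by (rule negligible_differentiable_image_negligible[OF order_refl assms(3)])
  then show ?thesis using negligible_subset sub by blast
qed

lemma double_card_image_le:
  assumes "finite A" "\<forall>x\<in>A. \<exists>y\<in>A. y \<noteq> x \<and> f y = f x"
  shows "2 * card (f ` A) \<le> card A"
proof -
  have eq: "A = (\<Union>v\<in>f ` A. {x\<in>A. f x = v})" by blast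
  have "card A = (\<Sum>v\<in>f ` A. card {x\<in>A. f x = v})"
    by (subst eq, rule card_UN_disjoint) (use assms(1) in auto)
  moreover have "(\<Sum>v\<in>f ` A. card {x\<in>A. f x = v}) \<ge> (\<Sum>v\<in>f ` A. 2)"
  proof (rule sum_mono)
    fix v assume "v \<in> f ` A"
    then obtain x where x: "x \<in> A" "f x = v" by blast
    then obtain y where y: "y \<in> A" "y \<noteq> x" "f y = f x" using assms(2) by blast
    have "{x, y} \<subseteq> {x\<in>A. f x = v}" using x y by auto
    then have "card {x, y} \<le> card {x\<in>A. f x = v}" by (rule card_mono[rotated]) (use assms(1) in auto)
    then show "2 \<le> card {x\<in>A. f x = v}" using y by simp
  qed
  ultimately show ?thesis by simp
qed

lemma exists_subset_card_excess:
  fixes S K :: "nat set" and i :: "nat \<Rightarrow> nat"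
  assumes "finite S" "card S \<ge> R + card (i ` (S - K))"
  shows "\<exists>W\<subseteq>S. card W \<le> 2*R \<and> card W \<ge> R + card (i ` (W - K))"
  using assms
proof (induction "card S" arbitrary: S rule: less_induct)
  case less
  show ?case
  proof (cases "card S \<le> 2*R")
    case True then show ?thesis using less.prems by blast
  next
    case big: False
    show ?thesis
    proof (cases "card S > R + card (i ` (S - K))")
      case True
      have "S \<noteq> {}" using big by auto
      then obtain x where x: "x \<in> S" by blast
      have c: "card (S - {x}) = card S - 1" using x less.prems(1) by simp
      have "card (i ` (S - {x} - K)) \<le> card (i ` (S - K))"
        by (rule card_mono) (use less.prems(1) in auto)
      then have "card (S - {x}) \<ge> R + card (i ` (S - {x} - K))" using c True by linarith
      then obtain W where "W \<subseteq> S - {x}" "card W \<le> 2*R" "card W \<ge> R + card (i ` (W - K))"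
        using less.hyps[of "S - {x}"] c less.prems(1) x big by (metis card_gt_0_iff diff_less empty_iff finite_Diff zero_less_one)
      then show ?thesis by blast
    next
      case False
      then have eq: "card S = R + card (i ` (S - K))" using less.prems(2) by linarith
      have "\<exists>x\<in>S - K. \<forall>y\<in>S - K. y \<noteq> x \<longrightarrow> i y \<noteq> i x"
      proof (rule ccontr)
        assume "\<not> ?thesis"
        then have "\<forall>x\<in>S - K. \<exists>y\<in>S - K. y \<noteq> x \<and> i y = i x" by blast
        then have "2 * card (i ` (S - K)) \<le> card (S - K)" by (rule double_card_image_le[rotated]) (use less.prems(1) in auto)
        moreover have "card (S - K) \<le> card S" by (rule card_mono) (use less.prems(1) in auto)
        ultimately show False using eq big by linarith
      qed
      then obtain x where x: "x \<in> S - K" "\<forall>y\<in>S - K. y \<noteq> x \<longrightarrow> i y \<noteq> i x" by blast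
      have c: "card (S - {x}) = card S - 1" using x less.prems(1) by simp
      have im: "i ` (S - {x} - K) = i ` (S - K) - {i x}" using x by auto
      have "card (i ` (S - {x} - K)) = card (i ` (S - K)) - 1"
        unfolding im using x less.prems(1) by (simp add: card_Diff_singleton)
      moreover have "card (i ` (S - K)) \<ge> 1" using x less.prems(1)
        by (metis Diff_iff One_nat_def Suc_leI card_gt_0_iff empty_iff finite_Diff finite_imageI imageI)
      ultimately have "card (S - {x}) \<ge> R + card (i ` (S - {x} - K))" using c eq by linarith
      then obtain W where "W \<subseteq> S - {x}" "card W \<le> 2*R" "card W \<ge> R + card (i ` (W - K))"
        using less.hyps[of "S - {x}"] c less.prems(1) x big
        by (metis DiffD1 card_gt_0_iff diff_less empty_iff finite_Diff zero_less_one)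
      then show ?thesis by blast
    qed
  qed
qed

lemma exists_class_retraction:
  assumes "finite C"
  obtains r where "\<And>p. p \<in> C \<Longrightarrow> r p \<in> C \<and> \<kappa> (r p) = \<kappa> p \<and> r (r p) = r p"
    and "card (r ` C) \<le> card (\<kappa> ` C)"
proof -
  define rep where "rep c = (SOME p. p \<in> C \<and> \<kappa> p = c)" for c
  have rep: "rep (\<kappa> p) \<in> C \<and> \<kappa> (rep (\<kappa> p)) = \<kappa> p" if "p \<in> C" for p
    unfolding rep_def by (rule someI_ex) (use that in blast)
  have "rep (\<kappa> p) \<in> C \<and> \<kappa> (rep (\<kappa> p)) = \<kappa> p \<and> rep (\<kappa> (rep (\<kappa> p))) = rep (\<kappa> p)" if "p \<in> C" for p
    using rep[OF that] by simp
  moreover have "card ((\<lambda>p. rep (\<kappa> p)) ` C) \<le> card (\<kappa> ` C)"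
  proof -
    have "(\<lambda>p. rep (\<kappa> p)) ` C = rep ` \<kappa> ` C" by (simp add: image_image)
    then show ?thesis using card_image_le assms by (metis finite_imageI)
  qed
  ultimately show thesis using that[of "\<lambda>p. rep (\<kappa> p)"] by blast
qed

lemma inner_sum_Basis_scaleR:
  fixes f :: "'o::euclidean_space \<Rightarrow> real"
  assumes p0: "p0 \<in> Basis"
  shows "(\<Sum>p\<in>Basis. f p *\<^sub>R p) \<bullet> p0 = f p0"
proof -
  have "(\<Sum>p\<in>Basis. f p *\<^sub>R p) \<bullet> p0 = (\<Sum>p\<in>Basis. f p * (p \<bullet> p0))" by (simp add: inner_sum_left)
  also have "\<dots> = (\<Sum>p\<in>Basis. if p = p0 then f p else 0)"
    by (rule sum.cong[OF refl]) (use p0 in \<open>auto simp: inner_Basis\<close>)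
  also have "\<dots> = f p0" using p0 by simp
  finally show ?thesis .
qed

lemma inner_Basis_eq_0_if_in_span:
  assumes "B \<subseteq> Basis" "x \<in> span B" "b \<in> Basis - B"
  shows "x \<bullet> b = 0"
  using assms span_substd_basis[OF assms(1)] by auto

lemma inner_eq_inner_proj_if_in_span:
  fixes a x :: "'a::euclidean_space"
  assumes B: "B \<subseteq> Basis" and x: "x \<in> span B"
  shows "a \<bullet> x = (\<Sum>b\<in>B. (a \<bullet> b) *\<^sub>R b) \<bullet> x"
proof -
  have fB: "finite B" using finite_subset[OF B finite_Basis] .
  have "x = (\<Sum>b\<in>Basis. (x \<bullet> b) *\<^sub>R b)" by (simp add: euclidean_representation)
  also have "\<dots> = (\<Sum>b\<in>B. (x \<bullet> b) *\<^sub>R b)"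
  proof (rule sum.mono_neutral_right)
    show "finite (Basis::'a set)" by simp
    show "B \<subseteq> Basis" by (rule B)
    show "\<forall>i\<in>Basis - B. (x \<bullet> i) *\<^sub>R i = 0" using inner_Basis_eq_0_if_in_span[OF B x] by auto
  qed
  finally have xe: "x = (\<Sum>b\<in>B. (x \<bullet> b) *\<^sub>R b)" .
  have "a \<bullet> x = (\<Sum>b\<in>B. (x \<bullet> b) * (a \<bullet> b))"
    by (subst xe) (simp add: inner_sum_right)
  also have "\<dots> = (\<Sum>b\<in>B. (a \<bullet> b) * (b \<bullet> x))"
    by (rule sum.cong[OF refl]) (simp add: inner_commute[of x] mult.commute)
  also have "\<dots> = (\<Sum>b\<in>B. (a \<bullet> b) *\<^sub>R b) \<bullet> x"
    by (simp add: inner_sum_left)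
  finally show ?thesis .
qed

lemma inner_proj_Basis:
  fixes a :: "'a::euclidean_space"
  assumes B: "B \<subseteq> Basis" and b': "b' \<in> Basis"
  shows "(\<Sum>b\<in>B. (a \<bullet> b) *\<^sub>R b) \<bullet> b' = (if b' \<in> B then a \<bullet> b' else 0)"
proof -
  have fB: "finite B" using finite_subset[OF B finite_Basis] .
  have "(\<Sum>b\<in>B. (a \<bullet> b) *\<^sub>R b) \<bullet> b' = (\<Sum>b\<in>B. (a \<bullet> b) * (b \<bullet> b'))"
    by (simp add: inner_sum_left)
  also have "\<dots> = (\<Sum>b\<in>B. if b = b' then a \<bullet> b else 0)"
  proof (rule sum.cong[OF refl])
    fix b assume "b \<in> B"
    then have "b \<in> Basis" using B by blast
    then show "(a \<bullet> b) * (b \<bullet> b') = (if b = b' then a \<bullet> b else 0)" using b' by (simp add: inner_Basis)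
  qed
  also have "\<dots> = (if b' \<in> B then a \<bullet> b' else 0)" using fB by simp
  finally show ?thesis .
qed

lemma in_span_if_orthogonal_to_complement:
  fixes v :: "'a::euclidean_space"
  assumes "\<And>z. (\<And>w. w \<in> span S \<Longrightarrow> orthogonal z w) \<Longrightarrow> orthogonal v z"
  shows "v \<in> span S"
proof -
  obtain y z where yz: "y \<in> span S" "\<And>w. w \<in> span S \<Longrightarrow> orthogonal z w" "v = y + z"
    using orthogonal_subspace_decomp_exists by blast
  have "orthogonal v z" using assms yz(2) by blast
  moreover have "orthogonal z y" using yz(2) yz(1) by blast
  ultimately have e1: "(y + z) \<bullet> z = 0" and e2: "y \<bullet> z = 0"
    using yz(3) by (simp_all add: orthogonal_def inner_commute)
  then have "z \<bullet> z = 0" by (simp add: inner_add_left)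
  then have "z = 0" by simp
  then show ?thesis using yz by simp
qed

lemma dependency_unique_up_to_scale:
  fixes x :: "'i \<Rightarrow> 'b::real_vector"
  assumes P: "finite P" "p0 \<in> P"
    and indep: "\<And>c. (\<Sum>p\<in>P - {p0}. c p *\<^sub>R x p) = 0 \<Longrightarrow> \<forall>p\<in>P - {p0}. c p = 0"
    and l: "(\<Sum>p\<in>P. l p *\<^sub>R x p) = 0" and l': "(\<Sum>p\<in>P. l' p *\<^sub>R x p) = 0" "l' p0 \<noteq> 0"
  shows "\<forall>p\<in>P. l p = (l p0 / l' p0) * l' p"
proof -
  define w where "w p = l p - (l p0 / l' p0) * l' p" for p
  have "(\<Sum>p\<in>P. w p *\<^sub>R x p) = (\<Sum>p\<in>P. l p *\<^sub>R x p) - (l p0 / l' p0) *\<^sub>R (\<Sum>p\<in>P. l' p *\<^sub>R x p)"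
    unfolding w_def scaleR_diff_left sum_subtractf scaleR_sum_right scaleR_scaleR ..
  moreover have "w p0 = 0" using l'(2) by (simp add: w_def)
  ultimately have "(\<Sum>p\<in>P - {p0}. w p *\<^sub>R x p) = 0"
    using l l'(1) sum.remove[OF P, of "\<lambda>p. w p *\<^sub>R x p"] by simp
  then have "\<forall>p\<in>P - {p0}. w p = 0" by (rule indep)
  then show ?thesis using l'(2) by (auto simp: w_def)
qed

lemma dim_span_lifted_points:
  fixes x :: "'i \<Rightarrow> 'a::euclidean_space"
  assumes Z: "finite Z" and indep: "\<And>c. (\<Sum>z\<in>Z. c z *\<^sub>R (x z, 1::real)) = 0 \<Longrightarrow> \<forall>z\<in>Z. c z = 0"
  shows "dim (span ((\<lambda>z. (x z, 1::real)) ` Z)) = card Z"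
proof -
  let ?V = "(\<lambda>z. (x z, 1::real)) ` Z"
  have inj: "inj_on (\<lambda>z. (x z, 1::real)) Z"
  proof (rule inj_onI, rule ccontr)
    fix z z' assume zz: "z \<in> Z" "z' \<in> Z" "(x z, 1::real) = (x z', 1)" "z \<noteq> z'"
    define c where "c p = (if p = z then 1 else if p = z' then -1 else 0::real)" for p
    have "(\<Sum>p\<in>Z. c p *\<^sub>R (x p, 1::real)) = (\<Sum>p\<in>{z, z'}. c p *\<^sub>R (x p, 1::real))"
      using zz Z by (intro sum.mono_neutral_right) (auto simp: c_def zero_prod_def)
    also have "\<dots> = 0" using zz by (simp add: c_def zero_prod_def)
    finally have "c z = 0" using indep zz(1) by blast
    then show False by (simp add: c_def)
  qed
  have "independent ?V"
    unfolding independent_explicit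
  proof (intro conjI allI impI ballI)
    show "finite ?V" using Z by simp
    fix c v assume h: "(\<Sum>v\<in>?V. c v *\<^sub>R v) = 0" and v: "v \<in> ?V"
    have "(\<Sum>z\<in>Z. c (x z, 1) *\<^sub>R (x z, 1::real)) = 0"
      using h by (simp add: sum.reindex[OF inj])
    then have "\<forall>z\<in>Z. c (x z, 1) = 0" by (rule indep)
    then show "c v = 0" using v by blast
  qed
  then have "dim ?V = card ?V" by (rule dim_eq_card_independent)
  then show ?thesis using card_image[OF inj] by (simp add: dim_span)
qed

section \<open>Lines through the origin of the plane\<close>

definition parallel2 :: "real \<times> real \<Rightarrow> real \<times> real \<Rightarrow> bool" where
  "parallel2 v w \<longleftrightarrow> fst v * snd w = snd v * fst w"

definition mat2_apply :: "real \<Rightarrow> real \<Rightarrow> real \<Rightarrow> real \<Rightarrow> real \<times> real \<Rightarrow> real \<times> real" where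
  "mat2_apply A B C D v = (A * fst v + B * snd v, C * fst v + D * snd v)"

lemma parallel2_mat2_iff:
  assumes "A * D - B * C \<noteq> 0"
  shows "parallel2 (mat2_apply A B C D v) (mat2_apply A B C D w) \<longleftrightarrow> parallel2 v w"
proof -
  have "fst (mat2_apply A B C D v) * snd (mat2_apply A B C D w) - snd (mat2_apply A B C D v) * fst (mat2_apply A B C D w)
        = (A * D - B * C) * (fst v * snd w - snd v * fst w)"
    by (simp add: mat2_apply_def algebra_simps)
  then show ?thesis using assms unfolding parallel2_def by (metis eq_iff_diff_eq_0 mult_eq_0_iff)
qed

lemma mat2_apply_eq_0_iff:
  assumes "A * D - B * C \<noteq> 0"
  shows "mat2_apply A B C D v = 0 \<longleftrightarrow> v = 0"
proof
  assume h: "mat2_apply A B C D v = 0"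
  obtain x y where v: "v = (x, y)" by fastforce
  have e1: "A * x + B * y = 0" "C * x + D * y = 0" using h v by (auto simp: mat2_apply_def zero_prod_def)
  have "(A * D - B * C) * x = D * (A * x + B * y) - B * (C * x + D * y)" by (simp add: algebra_simps)
  then have "x = 0" using e1 assms by simp
  have "(A * D - B * C) * y = A * (C * x + D * y) - C * (A * x + B * y)" by (simp add: algebra_simps)
  then have "y = 0" using e1 assms by simp
  show "v = 0" using v \<open>x = 0\<close> \<open>y = 0\<close> by (simp add: zero_prod_def)
qed (simp add: mat2_apply_def zero_prod_def)

lemma parallel2_trans:
  assumes "w \<noteq> 0" "parallel2 u w" "parallel2 v w"
  shows "parallel2 u v"
proof -
  obtain u1 u2 v1 v2 w1 w2 where uvw: "u = (u1,u2)" "v = (v1,v2)" "w = (w1,w2)" by fastforce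
  have h: "u1 * w2 = u2 * w1" "v1 * w2 = v2 * w1" using assms uvw by (auto simp: parallel2_def)
  have "w1 \<noteq> 0 \<or> w2 \<noteq> 0" using assms(1) uvw by (auto simp: zero_prod_def)
  then have "u1 * v2 = u2 * v1"
  proof
    assume w1: "w1 \<noteq> 0"
    have "w1 * (u1 * v2) = u1 * (v2 * w1)" by (simp add: algebra_simps)
    also have "\<dots> = u1 * (v1 * w2)" using h by simp
    also have "\<dots> = v1 * (u1 * w2)" by (simp add: algebra_simps)
    also have "\<dots> = v1 * (u2 * w1)" using h by simp
    also have "\<dots> = w1 * (u2 * v1)" by (simp add: algebra_simps)
    finally show ?thesis using w1 by simp
  next
    assume w2: "w2 \<noteq> 0"
    have "w2 * (u1 * v2) = v2 * (u1 * w2)" by (simp add: algebra_simps)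
    also have "\<dots> = v2 * (u2 * w1)" using h by simp
    also have "\<dots> = u2 * (v2 * w1)" by (simp add: algebra_simps)
    also have "\<dots> = u2 * (v1 * w2)" using h by simp
    also have "\<dots> = w2 * (u2 * v1)" by (simp add: algebra_simps)
    finally show ?thesis using w2 by simp
  qed
  then show ?thesis using uvw by (simp add: parallel2_def)
qed

section \<open>Polynomial coordinates\<close>

definition poly_coord :: "('b::euclidean_space \<Rightarrow> nat) \<Rightarrow> 'b \<Rightarrow> nat \<Rightarrow> real" where
  "poly_coord ix \<Theta> j = (\<Sum>p\<in>Basis. (\<Theta> \<bullet> p) * real j ^ ix p)"

definition node_values :: "('b::euclidean_space \<Rightarrow> nat) \<Rightarrow> ('b \<Rightarrow> nat) \<Rightarrow> 'b \<Rightarrow> 'b" where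
  "node_values ix J \<Theta> = (\<Sum>p\<in>Basis. poly_coord ix \<Theta> (J p) *\<^sub>R p)"

lemma node_values_inner: "p \<in> Basis \<Longrightarrow> node_values ix J \<Theta> \<bullet> p = poly_coord ix \<Theta> (J p)"
  by (simp add: node_values_def inner_sum_left inner_Basis if_distrib cong: if_cong)

lemma poly_coord_add: "poly_coord ix (x + y) j = poly_coord ix x j + poly_coord ix y j"
  by (simp add: poly_coord_def inner_add_left distrib_right sum.distrib)

lemma poly_coord_scaleR: "poly_coord ix (c *\<^sub>R x) j = c * poly_coord ix x j"
  by (simp add: poly_coord_def sum_distrib_left mult.assoc)

lemma linear_node_values: "linear (node_values ix J :: 'b::euclidean_space \<Rightarrow> 'b)"
proof (rule linearI)
  fix x y :: "'b::euclidean_space" and c :: real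
  show "node_values ix J (x + y) = node_values ix J x + node_values ix J y"
    unfolding node_values_def poly_coord_add scaleR_add_left by (rule sum.distrib)
  show "node_values ix J (c *\<^sub>R x) = c *\<^sub>R node_values ix J x"
    unfolding node_values_def poly_coord_scaleR scaleR_sum_right scaleR_scaleR by (rule refl)
qed

lemma sparse_poly_coeffs_eq_0:
  fixes c :: "'i \<Rightarrow> real" and X :: "real set"
  assumes I: "finite I" "inj_on ix I" "\<And>p. p \<in> I \<Longrightarrow> ix p < n"
    and X: "finite X" "n \<le> card X" and roots: "\<And>x. x \<in> X \<Longrightarrow> (\<Sum>p\<in>I. c p * x ^ ix p) = 0"
  shows "\<forall>p\<in>I. c p = 0"
proof -
  define P where "P = (\<Sum>p\<in>I. monom (c p) (ix p))"
  have polyP: "poly P x = (\<Sum>p\<in>I. c p * x ^ ix p)" for x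
    by (simp add: P_def poly_sum poly_monom)
  have P0: "P = 0"
  proof (rule ccontr)
    assume "P \<noteq> 0"
    have "degree P < n"
    proof (cases "I = {}")
      case False
      then have "n > 0" using I(3) by fastforce
      have "degree P \<le> n - 1" unfolding P_def
      proof (rule degree_sum_le)
        fix p assume "p \<in> I"
        then have "ix p \<le> n - 1" using I(3) by fastforce
        then show "degree (monom (c p) (ix p)) \<le> n - 1" using degree_monom_le order_trans by blast
      qed (rule I(1))
      then show ?thesis using \<open>n > 0\<close> by linarith
    qed (use \<open>P \<noteq> 0\<close> in \<open>simp add: P_def\<close>)
    moreover have "card X \<le> card {x. poly P x = 0}"
      using roots polyP by (intro card_mono[OF poly_roots_finite[OF \<open>P \<noteq> 0\<close>]]) auto
    ultimately show False using card_poly_roots_bound[OF \<open>P \<noteq> 0\<close>] X(2) by linarith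
  qed
  have "c p = 0" if p: "p \<in> I" for p
  proof -
    have "coeff P (ix p) = (\<Sum>p'\<in>I. if ix p' = ix p then c p' else 0)"
      by (simp add: P_def coeff_sum coeff_monom)
    also have "\<dots> = (\<Sum>p'\<in>I. if p' = p then c p' else 0)"
      by (rule sum.cong) (use I(2) p in \<open>auto simp: inj_on_def\<close>)
    also have "\<dots> = c p" using p I(1) by simp
    finally show ?thesis using P0 by simp
  qed
  then show ?thesis by blast
qed

lemma inj_node_values:
  fixes ix :: "'b::euclidean_space \<Rightarrow> nat"
  assumes ix: "inj_on ix Basis" "\<And>p. p \<in> Basis \<Longrightarrow> ix p < DIM('b)" and J: "inj_on J Basis"
  shows "inj (node_values ix J)"
proof -
  have "\<Theta> = 0" if h: "node_values ix J \<Theta> = 0" for \<Theta>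
  proof -
    have "card ((\<lambda>p. real (J p)) ` Basis) = DIM('b)"
      by (rule card_image) (use J in \<open>auto simp: inj_on_def\<close>)
    moreover have "(\<Sum>p\<in>Basis. (\<Theta> \<bullet> p) * x ^ ix p) = 0" if "x \<in> (\<lambda>p. real (J p)) ` Basis" for x
      using that h node_values_inner[of _ ix J \<Theta>] by (auto simp: poly_coord_def)
    ultimately have "\<forall>p\<in>Basis. \<Theta> \<bullet> p = 0"
      by (intro sparse_poly_coeffs_eq_0[where n = "DIM('b)" and X = "(\<lambda>p. real (J p)) ` Basis"])
        (use ix in auto)
    then show ?thesis by (metis euclidean_eqI inner_zero_left)
  qed
  then show ?thesis by (simp add: linear_injective_0[OF linear_node_values])
qed

definition aff_val :: "('a::euclidean_space \<times> real) \<Rightarrow> 'a \<Rightarrow> real" where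
  "aff_val g x = fst g \<bullet> x + snd g"

lemma aff_val_diff: "aff_val (g - h) x = aff_val g x - aff_val h x"
  by (simp add: aff_val_def inner_diff_left)

lemma aff_val_add: "aff_val (g + h) x = aff_val g x + aff_val h x"
  by (simp add: aff_val_def inner_add_left)

lemma aff_val_scaleR: "aff_val (c *\<^sub>R g) x = c * aff_val g x"
  by (simp add: aff_val_def algebra_simps)

lemma aff_val_zero: "aff_val 0 x = 0"
  by (simp add: aff_val_def)

lemma inner_Pair_one: "(x, 1::real) \<bullet> g = aff_val g x"
  by (cases g) (simp add: aff_val_def inner_Pair inner_commute)

lemma functionals_on_span_eq:
  fixes B :: "'a::euclidean_space set"
  assumes "B \<subseteq> Basis"
  shows "{g::'a \<times> real. \<forall>b\<in>Basis - B. fst g \<bullet> b = 0} = span B \<times> UNIV"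
  using span_substd_basis[OF assms] by auto

lemma dim_functionals_on_span:
  fixes B :: "'a::euclidean_space set"
  assumes "B \<subseteq> Basis"
  shows "dim {g::'a \<times> real. \<forall>b\<in>Basis - B. fst g \<bullet> b = 0} = card B + 1"
proof -
  have "dim (span B \<times> (UNIV::real set)) = dim (span B) + dim (UNIV::real set)"
    by (rule dim_Times) (auto intro: subspace_span)
  moreover have "dim (span B) = card B"
    using dim_substandard[OF assms] span_substd_basis[OF assms] by simp
  ultimately show ?thesis using functionals_on_span_eq[OF assms] by simp
qed

lemma subspace_functionals_on_span: "subspace {g::'a::euclidean_space \<times> real. \<forall>b\<in>Basis - B. fst g \<bullet> b = 0}"
  by (auto simp: subspace_def inner_add_left)

lemma dim_vanishing_functionals:
  fixes qq :: "'o::euclidean_space \<Rightarrow> 'a::euclidean_space"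
  assumes B: "B \<subseteq> Basis" and qqB: "\<And>p. qq p \<in> span B"
    and GP: "\<And>P c. P \<subseteq> Basis \<Longrightarrow> card P \<le> card B + 1 \<Longrightarrow> (\<Sum>p\<in>P. c p *\<^sub>R (qq p, 1::real)) = 0 \<Longrightarrow> \<forall>p\<in>P. c p = 0"
    and Z: "Z \<subseteq> Basis" "card Z \<le> card B + 1"
  shows "dim {g::'a \<times> real. (\<forall>b\<in>Basis - B. fst g \<bullet> b = 0) \<and> (\<forall>z\<in>Z. aff_val g (qq z) = 0)} + card Z = card B + 1"
proof -
  let ?U = "{g::'a \<times> real. \<forall>b\<in>Basis - B. fst g \<bullet> b = 0}"
  let ?V = "(\<lambda>z. (qq z, 1::real)) ` Z"
  have finZ: "finite Z" using finite_subset[OF Z(1) finite_Basis] .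
  have VU: "?V \<subseteq> ?U" using inner_Basis_eq_0_if_in_span[OF B qqB] by auto
  have YU: "span ?V \<subseteq> ?U" by (rule span_minimal[OF VU subspace_functionals_on_span])
  have eqA: "{g. (\<forall>b\<in>Basis - B. fst g \<bullet> b = 0) \<and> (\<forall>z\<in>Z. aff_val g (qq z) = 0)}
      = {y \<in> ?U. \<forall>x\<in>span ?V. orthogonal x y}"
  proof (intro set_eqI iffI)
    fix y assume y: "y \<in> {g. (\<forall>b\<in>Basis - B. fst g \<bullet> b = 0) \<and> (\<forall>z\<in>Z. aff_val g (qq z) = 0)}"
    have "orthogonal y x" if "x \<in> span ?V" for x
    proof (rule orthogonal_to_span[OF that])
      fix v assume "v \<in> ?V"
      then obtain z where z: "z \<in> Z" "v = (qq z, 1)" by blast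
      from z(1) y have "aff_val y (qq z) = 0" by blast
      then show "orthogonal y v" using z(2) by (simp add: orthogonal_def inner_commute[of y] inner_Pair_one)
    qed
    then show "y \<in> {y \<in> ?U. \<forall>x\<in>span ?V. orthogonal x y}" using y by (auto simp: orthogonal_commute)
  next
    fix y assume y: "y \<in> {y \<in> ?U. \<forall>x\<in>span ?V. orthogonal x y}"
    have "aff_val y (qq z) = 0" if "z \<in> Z" for z
    proof -
      have "(qq z, 1::real) \<in> span ?V" using that by (intro span_base) blast
      then have "orthogonal (qq z, 1::real) y" using y by blast
      then show ?thesis by (simp add: orthogonal_def inner_Pair_one)
    qed
    then show "y \<in> {g. (\<forall>b\<in>Basis - B. fst g \<bullet> b = 0) \<and> (\<forall>z\<in>Z. aff_val g (qq z) = 0)}" using y by auto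
  qed
  have dV: "dim (span ?V) = card Z"
    by (rule dim_span_lifted_points[OF finZ]) (use GP[OF Z] in blast)
  have "dim {y \<in> ?U. \<forall>x\<in>span ?V. orthogonal x y} + dim (span ?V) = dim ?U"
    by (rule dim_subspace_orthogonal_to_vectors[OF subspace_span subspace_functionals_on_span YU])
  then show ?thesis using dV dim_functionals_on_span[OF B] eqA by simp
qed

lemma card_le_if_nonzero_vanishing:
  fixes qq :: "'o::euclidean_space \<Rightarrow> 'a::euclidean_space"
  assumes B: "B \<subseteq> Basis" and qqB: "\<And>p. qq p \<in> span B"
    and GP: "\<And>P c. P \<subseteq> Basis \<Longrightarrow> card P \<le> card B + 1 \<Longrightarrow> (\<Sum>p\<in>P. c p *\<^sub>R (qq p, 1::real)) = 0 \<Longrightarrow> \<forall>p\<in>P. c p = 0"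
    and Z: "Z \<subseteq> Basis"
    and g: "\<forall>b\<in>Basis - B. fst g \<bullet> b = 0" "\<forall>z\<in>Z. aff_val g (qq z) = 0" "g \<noteq> 0"
  shows "card Z \<le> card B"
proof (rule ccontr)
  assume "\<not> ?thesis"
  then have "card B + 1 \<le> card Z" by linarith
  then obtain Z' where Z': "Z' \<subseteq> Z" "card Z' = card B + 1"
    by (rule obtain_subset_with_card_n)
  have "dim {g::'a \<times> real. (\<forall>b\<in>Basis - B. fst g \<bullet> b = 0) \<and> (\<forall>z\<in>Z'. aff_val g (qq z) = 0)} + card Z'
      = card B + 1"
    by (rule dim_vanishing_functionals[where qq = qq, OF B qqB GP]) (use Z' Z in auto)
  then have "{g::'a \<times> real. (\<forall>b\<in>Basis - B. fst g \<bullet> b = 0) \<and> (\<forall>z\<in>Z'. aff_val g (qq z) = 0)} \<subseteq> {0}"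
    using Z'(2) by (simp add: dim_eq_0)
  moreover have "g \<in> {g::'a \<times> real. (\<forall>b\<in>Basis - B. fst g \<bullet> b = 0) \<and> (\<forall>z\<in>Z'. aff_val g (qq z) = 0)}"
    using g Z'(1) by blast
  ultimately show False using g(3) by blast
qed

lemma dim_tied_coordinates_le:
  fixes Zr Fr :: "'o::euclidean_space set"
  assumes Fr: "Fr \<subseteq> Basis"
  shows "dim {u::'o. (\<forall>p\<in>Zr. u \<bullet> p = 0) \<and> (\<forall>p\<in>Basis - Zr - Fr. u \<bullet> p = u \<bullet> ld p)}
         \<le> card Fr + card (ld ` (Basis - Zr - Fr))"
proof -
  define Cl where "Cl = Basis - Zr - Fr"
  define vr where "vr r = (\<Sum>p\<in>{p\<in>Cl. ld p = r}. p)" for r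
  define Gen where "Gen = Fr \<union> vr ` (ld ` Cl)"
  have finCl: "finite Cl" unfolding Cl_def by simp
  have finFr: "finite Fr" using finite_subset[OF Fr finite_Basis] .
  have sub: "{u::'o. (\<forall>p\<in>Zr. u \<bullet> p = 0) \<and> (\<forall>p\<in>Cl. u \<bullet> p = u \<bullet> ld p)} \<subseteq> span Gen"
  proof
    fix u :: 'o assume u: "u \<in> {u. (\<forall>p\<in>Zr. u \<bullet> p = 0) \<and> (\<forall>p\<in>Cl. u \<bullet> p = u \<bullet> ld p)}"
    have "u = (\<Sum>p\<in>Basis. (u \<bullet> p) *\<^sub>R p)" by (simp add: euclidean_representation)
    also have "\<dots> = (\<Sum>p\<in>Basis - Fr. (u \<bullet> p) *\<^sub>R p) + (\<Sum>p\<in>Fr. (u \<bullet> p) *\<^sub>R p)"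
      by (rule sum.subset_diff[OF Fr finite_Basis])
    also have "(\<Sum>p\<in>Basis - Fr. (u \<bullet> p) *\<^sub>R p) = (\<Sum>p\<in>Cl. (u \<bullet> p) *\<^sub>R p)"
    proof (rule sum.mono_neutral_right)
      show "finite (Basis - Fr)" by simp
      show "Cl \<subseteq> Basis - Fr" unfolding Cl_def by blast
      show "\<forall>i\<in>Basis - Fr - Cl. (u \<bullet> i) *\<^sub>R i = 0" using u unfolding Cl_def by auto
    qed
    also have "\<dots> = (\<Sum>p\<in>Cl. (u \<bullet> ld p) *\<^sub>R p)"
      by (rule sum.cong) (use u in auto)
    also have "\<dots> = (\<Sum>r\<in>ld ` Cl. (\<Sum>p\<in>{p\<in>Cl. ld p = r}. (u \<bullet> ld p) *\<^sub>R p))"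
      by (rule sum.image_gen[OF finCl])
    also have "\<dots> = (\<Sum>r\<in>ld ` Cl. (u \<bullet> r) *\<^sub>R vr r)"
    proof (rule sum.cong[OF refl])
      fix r assume "r \<in> ld ` Cl"
      have "(\<Sum>p\<in>{p\<in>Cl. ld p = r}. (u \<bullet> ld p) *\<^sub>R p) = (\<Sum>p\<in>{p\<in>Cl. ld p = r}. (u \<bullet> r) *\<^sub>R p)"
        by (rule sum.cong) auto
      then show "(\<Sum>p\<in>{p\<in>Cl. ld p = r}. (u \<bullet> ld p) *\<^sub>R p) = (u \<bullet> r) *\<^sub>R vr r"
        by (simp add: vr_def scaleR_sum_right)
    qed
    finally have ueq: "u = (\<Sum>r\<in>ld ` Cl. (u \<bullet> r) *\<^sub>R vr r) + (\<Sum>p\<in>Fr. (u \<bullet> p) *\<^sub>R p)" .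
    have "(\<Sum>r\<in>ld ` Cl. (u \<bullet> r) *\<^sub>R vr r) \<in> span Gen"
      by (rule span_sum, rule span_mul, rule span_base) (auto simp: Gen_def)
    moreover have "(\<Sum>p\<in>Fr. (u \<bullet> p) *\<^sub>R p) \<in> span Gen"
      by (rule span_sum, rule span_mul, rule span_base) (auto simp: Gen_def)
    ultimately have "(\<Sum>r\<in>ld ` Cl. (u \<bullet> r) *\<^sub>R vr r) + (\<Sum>p\<in>Fr. (u \<bullet> p) *\<^sub>R p) \<in> span Gen"
      by (rule span_add)
    then show "u \<in> span Gen" by (simp only: ueq[symmetric])
  qed
  have "dim {u::'o. (\<forall>p\<in>Zr. u \<bullet> p = 0) \<and> (\<forall>p\<in>Cl. u \<bullet> p = u \<bullet> ld p)} \<le> dim (span Gen)"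
    by (rule dim_subset[OF sub])
  also have "\<dots> = dim Gen" by simp
  also have "\<dots> \<le> card Gen" by (rule dim_le_card') (simp add: Gen_def finFr finCl)
  also have "\<dots> \<le> card Fr + card (vr ` (ld ` Cl))" unfolding Gen_def by (rule card_Un_le)
  also have "card (vr ` (ld ` Cl)) \<le> card (ld ` Cl)" by (rule card_image_le) (simp add: finCl)
  finally show ?thesis unfolding Cl_def by simp
qed

lemma dim_functionals_vanishing_at_le:
  fixes B :: "'a::euclidean_space set"
  assumes B: "B \<subseteq> Basis" and e: "e \<in> B"
  shows "dim {g::'a \<times> real. (\<forall>b\<in>Basis - B. fst g \<bullet> b = 0) \<and> fst g \<bullet> e = 0} \<le> card B"
proof -
  define Gen where "Gen = (\<lambda>b. (b, 0::real)) ` (B - {e}) \<union> {(0, 1)}"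
  have finB: "finite B" using finite_subset[OF B finite_Basis] .
  have sub: "{g::'a \<times> real. (\<forall>b\<in>Basis - B. fst g \<bullet> b = 0) \<and> fst g \<bullet> e = 0} \<subseteq> span Gen"
  proof
    fix g :: "'a \<times> real" assume g: "g \<in> {g. (\<forall>b\<in>Basis - B. fst g \<bullet> b = 0) \<and> fst g \<bullet> e = 0}"
    have "fst g = (\<Sum>b\<in>Basis. (fst g \<bullet> b) *\<^sub>R b)" by (simp add: euclidean_representation)
    also have "\<dots> = (\<Sum>b\<in>B - {e}. (fst g \<bullet> b) *\<^sub>R b)"
    proof (rule sum.mono_neutral_right)
      show "finite (Basis :: 'a set)" by simp
      show "B - {e} \<subseteq> Basis" using B by blast
      show "\<forall>i\<in>Basis - (B - {e}). (fst g \<bullet> i) *\<^sub>R i = 0" using g by auto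
    qed
    finally have fg: "fst g = (\<Sum>b\<in>B - {e}. (fst g \<bullet> b) *\<^sub>R b)" .
    have geq: "g = (\<Sum>b\<in>B - {e}. (fst g \<bullet> b) *\<^sub>R (b, 0::real)) + snd g *\<^sub>R (0, 1)"
    proof (rule prod_eqI)
      show "fst g = fst ((\<Sum>b\<in>B - {e}. (fst g \<bullet> b) *\<^sub>R (b, 0::real)) + snd g *\<^sub>R (0, 1))"
        using fg by (simp add: fst_sum)
      show "snd g = snd ((\<Sum>b\<in>B - {e}. (fst g \<bullet> b) *\<^sub>R (b, 0::real)) + snd g *\<^sub>R (0, 1))"
        by (simp add: snd_sum)
    qed
    have s1: "(\<Sum>b\<in>B - {e}. (fst g \<bullet> b) *\<^sub>R (b, 0::real)) \<in> span Gen"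
      by (rule span_sum, rule span_mul, rule span_base) (auto simp: Gen_def)
    have s2: "snd g *\<^sub>R (0::'a, 1::real) \<in> span Gen"
      by (rule span_mul, rule span_base) (auto simp: Gen_def)
    from span_add[OF s1 s2] show "g \<in> span Gen" by (simp only: geq[symmetric])
  qed
  have "dim {g::'a \<times> real. (\<forall>b\<in>Basis - B. fst g \<bullet> b = 0) \<and> fst g \<bullet> e = 0} \<le> dim (span Gen)"
    by (rule dim_subset[OF sub])
  also have "\<dots> = dim Gen" by simp
  also have "\<dots> \<le> card Gen" by (rule dim_le_card') (simp add: Gen_def finB)
  also have "\<dots> \<le> card ((\<lambda>b. (b, 0::real)) ` (B - {e})) + card {(0::'a, 1::real)}"
    unfolding Gen_def by (rule card_Un_le)
  also have "\<dots> \<le> card (B - {e}) + 1" using card_image_le[of "B - {e}" "\<lambda>b. (b, 0::real)"] finB by simp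
  also have "\<dots> = card B" using card_Suc_Diff1[OF finB e] by simp
  finally show ?thesis .
qed

section \<open>Null sets of coefficient vectors\<close>

text \<open>
  A point (u, g, l) of the parameter domain describes the values y at the nodes:
  y_p = l(qq p) + u_p g(qq p) for p \<notin> Fr, i.e. the pencil image (y_p - l(qq p), g(qq p)) of
  node p lies on the line of slope u_p; nodes on the same line share their slope
  (u_p = u_(ld p)), nodes sent to the origin (Zr) get slope 0, and y_p = u_p on the free
  nodes Fr.
\<close>

definition param_dom :: "'a::euclidean_space set \<Rightarrow> ('o::euclidean_space \<Rightarrow> 'a) \<Rightarrow> 'o set \<Rightarrow> 'o set \<Rightarrow> 'o set
     \<Rightarrow> ('o \<Rightarrow> 'o) \<Rightarrow> 'a \<Rightarrow> ('o \<times> ('a \<times> real) \<times> ('a \<times> real)) set" where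
  "param_dom B qq Zr Vr Fr ld e = {(u, g, l).
     (\<forall>p\<in>Zr. u \<bullet> p = 0) \<and> (\<forall>p\<in>Basis - Zr - Fr. u \<bullet> p = u \<bullet> ld p) \<and>
     (\<forall>b\<in>Basis - B. fst g \<bullet> b = 0) \<and> (\<forall>b\<in>Basis - B. fst l \<bullet> b = 0) \<and>
     fst g \<bullet> e = 1 \<and> fst l \<bullet> e = 0 \<and> (\<forall>z\<in>Zr \<union> Vr. aff_val g (qq z) = 0)}"

definition param_map :: "('o::euclidean_space \<Rightarrow> 'a::euclidean_space) \<Rightarrow> 'o set
     \<Rightarrow> ('o \<times> ('a \<times> real) \<times> ('a \<times> real)) \<Rightarrow> 'o" where
  "param_map qq Fr x = (\<Sum>p\<in>Basis. (if p \<in> Fr then fst x \<bullet> p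
       else aff_val (snd (snd x)) (qq p) + (fst x \<bullet> p) * aff_val (fst (snd x)) (qq p)) *\<^sub>R p)"

lemma param_map_inner: "p \<in> Basis \<Longrightarrow> param_map qq Fr x \<bullet> p = (if p \<in> Fr then fst x \<bullet> p
       else aff_val (snd (snd x)) (qq p) + (fst x \<bullet> p) * aff_val (fst (snd x)) (qq p))"
  unfolding param_map_def by (rule inner_sum_Basis_scaleR)

lemma differentiable_fst_comp: "f differentiable F \<Longrightarrow> (\<lambda>x. fst (f x)) differentiable F"
  unfolding differentiable_def by (blast intro: has_derivative_fst)

lemma differentiable_snd_comp: "f differentiable F \<Longrightarrow> (\<lambda>x. snd (f x)) differentiable F"
  unfolding differentiable_def by (blast intro: has_derivative_snd)

lemma param_map_differentiable: "(\<lambda>v. param_map qq Fr (c0 + v)) differentiable (at y)"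
proof -
  have tm: "(\<lambda>v. (if p \<in> Fr then fst (c0 + v) \<bullet> p
       else aff_val (snd (snd (c0 + v))) (qq p) + (fst (c0 + v) \<bullet> p) * aff_val (fst (snd (c0 + v))) (qq p)) *\<^sub>R p)
       differentiable (at y)" for p
    by (cases "p \<in> Fr") (simp_all add: aff_val_def differentiable_fst_comp differentiable_snd_comp)
  show ?thesis unfolding param_map_def
    by (rule differentiable_sum) (use tm in auto)
qed

lemma negligible_param_image:
  fixes qq :: "'o::euclidean_space \<Rightarrow> 'a::euclidean_space"
  assumes B: "B \<subseteq> Basis" and e: "e \<in> B" and qqB: "\<And>p. qq p \<in> span B"
    and GP: "\<And>P c. P \<subseteq> Basis \<Longrightarrow> card P \<le> card B + 1 \<Longrightarrow> (\<Sum>p\<in>P. c p *\<^sub>R (qq p, 1::real)) = 0 \<Longrightarrow> \<forall>p\<in>P. c p = 0"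
    and ZV: "Zr \<union> Vr \<subseteq> Basis" and Fr: "Fr \<subseteq> Basis"
    and cnt: "card Fr + card (ld ` (Basis - Zr - Fr)) + 2 * card B < DIM('o) + card (Zr \<union> Vr)"
  shows "negligible (param_map qq Fr ` param_dom B qq Zr Vr Fr ld e)"
proof (cases "param_dom B qq Zr Vr Fr ld e = {}")
  case True then show ?thesis by simp
next
  case False
  then obtain c0 where c0: "c0 \<in> param_dom B qq Zr Vr Fr ld e" by blast
  obtain u0 g0 l0 where c0eq: "c0 = (u0, g0, l0)" by (cases c0) auto
  define Ucl where "Ucl = {u::'o. (\<forall>p\<in>Zr. u \<bullet> p = 0) \<and> (\<forall>p\<in>Basis - Zr - Fr. u \<bullet> p = u \<bullet> ld p)}"
  define A where "A = {g::'a \<times> real. (\<forall>b\<in>Basis - B. fst g \<bullet> b = 0) \<and> (\<forall>z\<in>Zr \<union> Vr. aff_val g (qq z) = 0)}"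
  define A0 where "A0 = {g \<in> A. fst g \<bullet> e = 0}"
  define L0 where "L0 = {g::'a \<times> real. (\<forall>b\<in>Basis - B. fst g \<bullet> b = 0) \<and> fst g \<bullet> e = 0}"
  define S1 where "S1 = Ucl \<times> (A0 \<times> L0)"
  have g0: "g0 \<in> A" "fst g0 \<bullet> e = 1" using c0 unfolding c0eq param_dom_def A_def by auto
  have subUcl: "subspace Ucl" unfolding Ucl_def subspace_def by (auto simp: inner_add_left)
  have subA: "subspace A" unfolding A_def subspace_def by (auto simp: inner_add_left aff_val_add aff_val_scaleR aff_val_zero)
  have subA0: "subspace A0" using subA unfolding A0_def subspace_def by (auto simp: inner_add_left)
  have subL0: "subspace L0" unfolding L0_def subspace_def by (auto simp: inner_add_left)
  have subS1: "subspace S1" unfolding S1_def by (intro subspace_Times subUcl subA0 subL0)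
  have DomS1: "param_dom B qq Zr Vr Fr ld e \<subseteq> (\<lambda>v. c0 + v) ` S1"
  proof
    fix x assume x: "x \<in> param_dom B qq Zr Vr Fr ld e"
    obtain u g l where xeq: "x = (u, g, l)" by (cases x) auto
    have "x - c0 \<in> S1"
      using x c0 unfolding xeq c0eq param_dom_def S1_def Ucl_def A0_def A_def L0_def
      by (auto simp: inner_diff_left aff_val_diff)
    moreover have "x = c0 + (x - c0)" by simp
    ultimately show "x \<in> (\<lambda>v. c0 + v) ` S1" by blast
  qed
  have finZ: "finite (Zr \<union> Vr)" using finite_subset[OF ZV finite_Basis] .
  have "g0 \<noteq> 0" using g0(2) by auto
  then have cardZ: "card (Zr \<union> Vr) \<le> card B"
    by (intro card_le_if_nonzero_vanishing[where qq = qq, OF B qqB GP ZV]) (use g0(1) in \<open>simp_all add: A_def\<close>)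
  have dimA: "dim A + card (Zr \<union> Vr) = card B + 1"
  proof -
    have "card (Zr \<union> Vr) \<le> card B + 1" using cardZ by linarith
    then show ?thesis unfolding A_def using dim_vanishing_functionals[OF B qqB GP ZV] by simp
  qed
  have dimA0: "dim A0 < dim A"
  proof (rule dim_psubset)
    have "A0 \<subseteq> A" unfolding A0_def by blast
    moreover have "g0 \<notin> A0" using g0 unfolding A0_def by simp
    moreover have e1: "span A0 = A0" "span A = A" using subA subA0 by simp_all
    ultimately show "span A0 \<subset> span A" using g0(1) unfolding e1 by blast
  qed
  have dimL0: "dim L0 \<le> card B" unfolding L0_def by (rule dim_functionals_vanishing_at_le[OF B e])
  have dimU: "dim Ucl \<le> card Fr + card (ld ` (Basis - Zr - Fr))" unfolding Ucl_def by (rule dim_tied_coordinates_le[OF Fr])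
  have "dim S1 = dim Ucl + (dim A0 + dim L0)"
    unfolding S1_def using subUcl subA0 subL0 by (simp add: dim_Times subspace_Times)
  then have dS1: "dim S1 < DIM('o)" using dimA dimA0 dimL0 dimU cnt cardZ by linarith
  have "negligible ((\<lambda>v. param_map qq Fr (c0 + v)) ` S1)"
    by (rule negligible_differentiable_image_subspace[OF subS1 dS1 param_map_differentiable])
  moreover have "param_map qq Fr ` param_dom B qq Zr Vr Fr ld e \<subseteq> (\<lambda>v. param_map qq Fr (c0 + v)) ` S1"
    using DomS1 by blast
  ultimately show ?thesis using negligible_subset by blast
qed

definition dependency_hyperplane :: "('o::euclidean_space \<Rightarrow> 'a::euclidean_space) \<Rightarrow> 'o set \<Rightarrow> 'o set" where
  "dependency_hyperplane qq P = (if \<exists>l. (\<Sum>p\<in>P. l p *\<^sub>R (qq p, 1::real)) = 0 \<and> (\<exists>p\<in>P. l p \<noteq> 0)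
     then {x. (\<Sum>p\<in>P. (SOME l. (\<Sum>p\<in>P. l p *\<^sub>R (qq p, 1::real)) = 0 \<and> (\<exists>p\<in>P. l p \<noteq> 0)) p *\<^sub>R p) \<bullet> x = 0}
     else {})"

text \<open>The left-hand side minus card (Zr \<union> Vr) bounds the dimension of the parameter domain.\<close>

definition patterns :: "'a::euclidean_space set \<Rightarrow> ('o::euclidean_space set \<times> 'o set \<times> 'o set \<times> ('o \<Rightarrow> 'o) \<times> 'a) set" where
  "patterns B = {(Zr, Vr, Fr, ld, e). Zr \<subseteq> Basis \<and> Vr \<subseteq> Basis \<and> Fr \<subseteq> Basis \<and> ld \<in> Basis \<rightarrow>\<^sub>E Basis \<and> e \<in> B \<and>
     card Fr + card (ld ` (Basis - Zr - Fr)) + 2 * card B < DIM('o) + card (Zr \<union> Vr)}"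

definition bad_at_nodes :: "'a::euclidean_space set \<Rightarrow> ('o::euclidean_space \<Rightarrow> 'a) \<Rightarrow> 'o set" where
  "bad_at_nodes B qq = (\<Union>P\<in>{P. P \<subseteq> Basis \<and> card P = card B + 2}. dependency_hyperplane qq P) \<union>
     (\<Union>(Zr, Vr, Fr, ld, e)\<in>patterns B. param_map qq Fr ` param_dom B qq Zr Vr Fr ld e)"

lemma negligible_dependency_hyperplane: "P \<subseteq> Basis \<Longrightarrow> negligible (dependency_hyperplane qq P)"
proof (cases "\<exists>l. (\<Sum>p\<in>P. l p *\<^sub>R (qq p, 1::real)) = 0 \<and> (\<exists>p\<in>P. l p \<noteq> 0)")
  case True
  assume P: "P \<subseteq> Basis"
  define l where "l = (SOME l. (\<Sum>p\<in>P. l p *\<^sub>R (qq p, 1::real)) = 0 \<and> (\<exists>p\<in>P. l p \<noteq> 0))"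
  have "(\<Sum>p\<in>P. l p *\<^sub>R (qq p, 1::real)) = 0 \<and> (\<exists>p\<in>P. l p \<noteq> 0)"
    unfolding l_def by (rule someI_ex[OF True])
  then obtain p0 where p0: "p0 \<in> P" "l p0 \<noteq> 0" by blast
  have finP: "finite P" using finite_subset[OF P finite_Basis] .
  have "(\<Sum>p\<in>P. l p *\<^sub>R p) \<bullet> p0 = (\<Sum>p\<in>P. l p * (p \<bullet> p0))"
    by (simp add: inner_sum_left)
  also have "\<dots> = (\<Sum>p\<in>P. if p = p0 then l p else 0)"
  proof (rule sum.cong[OF refl])
    fix p assume "p \<in> P"
    then have "p \<in> Basis" "p0 \<in> Basis" using P p0 by blast+
    then show "l p * (p \<bullet> p0) = (if p = p0 then l p else 0)" by (simp add: inner_Basis)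
  qed
  also have "\<dots> = l p0" using p0 finP by simp
  finally have "(\<Sum>p\<in>P. l p *\<^sub>R p) \<noteq> 0" using p0 by auto
  then have "negligible {x. (\<Sum>p\<in>P. l p *\<^sub>R p) \<bullet> x = 0}" by (intro negligible_hyperplane) simp
  then show ?thesis using True unfolding dependency_hyperplane_def l_def by simp
next
  case False then show ?thesis unfolding dependency_hyperplane_def if_not_P[OF False] by simp
qed

lemma finite_patterns: "finite B \<Longrightarrow> finite (patterns B :: ('o::euclidean_space set \<times> 'o set \<times> 'o set \<times> ('o \<Rightarrow> 'o) \<times> 'a::euclidean_space) set)"
proof -
  assume fB: "finite B"
  have "(patterns B :: ('o set \<times> 'o set \<times> 'o set \<times> ('o \<Rightarrow> 'o) \<times> 'a) set) \<subseteq> Pow Basis \<times> Pow Basis \<times> Pow Basis \<times> (Basis \<rightarrow>\<^sub>E Basis) \<times> B"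
    unfolding patterns_def by auto
  moreover have "finite (Pow (Basis::'o set) \<times> Pow Basis \<times> Pow Basis \<times> (Basis \<rightarrow>\<^sub>E Basis) \<times> B)"
    using fB by (simp add: finite_PiE)
  ultimately show ?thesis by (rule finite_subset)
qed

lemma negligible_bad_at_nodes:
  fixes qq :: "'o::euclidean_space \<Rightarrow> 'a::euclidean_space"
  assumes B: "B \<subseteq> Basis" and qqB: "\<And>p. qq p \<in> span B"
    and GP: "\<And>P c. P \<subseteq> Basis \<Longrightarrow> card P \<le> card B + 1 \<Longrightarrow> (\<Sum>p\<in>P. c p *\<^sub>R (qq p, 1::real)) = 0 \<Longrightarrow> \<forall>p\<in>P. c p = 0"
  shows "negligible (bad_at_nodes B qq)"
proof -
  have fB: "finite B" using finite_subset[OF B finite_Basis] .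
  have n1: "negligible (\<Union>P\<in>{P. P \<subseteq> Basis \<and> card P = card B + 2}. dependency_hyperplane qq P)"
  proof (rule negligible_Union)
    show "finite (dependency_hyperplane qq ` {P. P \<subseteq> Basis \<and> card P = card B + 2})" by simp
    show "\<And>T. T \<in> dependency_hyperplane qq ` {P. P \<subseteq> Basis \<and> card P = card B + 2} \<Longrightarrow> negligible T"
      using negligible_dependency_hyperplane by blast
  qed
  have n2: "negligible (\<Union>(Zr, Vr, Fr, ld, e)\<in>patterns B. param_map qq Fr ` param_dom B qq Zr Vr Fr ld e)"
  proof (rule negligible_Union)
    show "finite ((\<lambda>(Zr, Vr, Fr, ld, e). param_map qq Fr ` param_dom B qq Zr Vr Fr ld e) ` patterns B)"
      by (rule finite_imageI[OF finite_patterns[OF fB]])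
    fix T assume "T \<in> (\<lambda>(Zr, Vr, Fr, ld, e). param_map qq Fr ` param_dom B qq Zr Vr Fr ld e) ` patterns B"
    then obtain Zr Vr Fr ld e where pat: "(Zr, Vr, Fr, ld, e) \<in> patterns B"
      and T: "T = param_map qq Fr ` param_dom B qq Zr Vr Fr ld e" by auto
    have "negligible (param_map qq Fr ` param_dom B qq Zr Vr Fr ld e)"
      using pat unfolding patterns_def
      by (intro negligible_param_image[OF B _ qqB GP]) auto
    then show "negligible T" using T by simp
  qed
  show ?thesis unfolding bad_at_nodes_def using n1 n2 by simp
qed

lemma in_dependency_hyperplane:
  fixes qq :: "'o::euclidean_space \<Rightarrow> 'a::euclidean_space"
  assumes P: "P \<subseteq> Basis"
    and indep: "\<And>p0 c. p0 \<in> P \<Longrightarrow> (\<Sum>p\<in>P - {p0}. c p *\<^sub>R (qq p, 1::real)) = 0 \<Longrightarrow> \<forall>p\<in>P - {p0}. c p = 0"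
    and l: "(\<Sum>p\<in>P. l p *\<^sub>R (qq p, 1::real)) = 0" "\<exists>p\<in>P. l p \<noteq> 0"
    and y: "(\<Sum>p\<in>P. l p * (y \<bullet> p)) = 0"
  shows "y \<in> dependency_hyperplane qq P"
proof -
  have ex: "\<exists>l. (\<Sum>p\<in>P. l p *\<^sub>R (qq p, 1::real)) = 0 \<and> (\<exists>p\<in>P. l p \<noteq> 0)" using l by blast
  define l' where "l' = (SOME l. (\<Sum>p\<in>P. l p *\<^sub>R (qq p, 1::real)) = 0 \<and> (\<exists>p\<in>P. l p \<noteq> 0))"
  have l': "(\<Sum>p\<in>P. l' p *\<^sub>R (qq p, 1::real)) = 0 \<and> (\<exists>p\<in>P. l' p \<noteq> 0)"
    unfolding l'_def by (rule someI_ex[OF ex])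
  then obtain p0 where p0: "p0 \<in> P" "l' p0 \<noteq> 0" by blast
  have finP: "finite P" using finite_subset[OF P finite_Basis] .
  define k where "k = l p0 / l' p0"
  have lk: "\<forall>p\<in>P. l p = k * l' p" unfolding k_def
    using dependency_unique_up_to_scale[OF finP p0(1) indep[OF p0(1)] l(1)] l' p0(2) by blast
  then have "k \<noteq> 0" using l(2) by auto
  moreover have "k * (\<Sum>p\<in>P. l' p * (y \<bullet> p)) = 0"
    using y lk by (simp add: sum_distrib_left mult.assoc)
  ultimately have "(\<Sum>p\<in>P. l' p * (y \<bullet> p)) = 0" by simp
  then have "(\<Sum>p\<in>P. l' p *\<^sub>R p) \<bullet> y = 0" by (simp add: inner_commute[of _ y] inner_sum_right)
  then show ?thesis unfolding dependency_hyperplane_def if_P[OF ex] l'_def[symmetric] by simp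
qed

lemma pencil_cover_in_param_image:
  fixes qq :: "'o::euclidean_space \<Rightarrow> 'a::euclidean_space" and y :: 'o
  assumes P: "P \<subseteq> Basis"
    and v: "\<And>p. p \<in> Basis \<Longrightarrow> v p = (y \<bullet> p - aff_val lm (qq p), aff_val gm (qq p))"
    and cov: "\<And>p. p \<in> P \<Longrightarrow> v p = 0 \<or> (D (\<kappa> p) \<noteq> 0 \<and> parallel2 (v p) (D (\<kappa> p)))"
    and Zr: "Zr = {p\<in>P. v p = 0}"
    and Vr: "Vr = {p\<in>P. v p \<noteq> 0 \<and> aff_val gm (qq p) = 0}"
    and Fr: "Fr = Vr \<union> (Basis - P)"
    and ld: "\<And>p. p \<in> Basis - Zr - Fr \<Longrightarrow> ld p \<in> Basis - Zr - Fr \<and> \<kappa> (ld p) = \<kappa> p \<and> ld (ld p) = ld p"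
    and gm: "\<forall>b\<in>Basis - B. fst gm \<bullet> b = 0" "fst gm \<bullet> e = 1"
    and lm: "\<forall>b\<in>Basis - B. fst lm \<bullet> b = 0" "fst lm \<bullet> e = 0"
  shows "y \<in> param_map qq Fr ` param_dom B qq Zr Vr Fr ld e"
proof -
  define slope where "slope r = (y \<bullet> r - aff_val lm (qq r)) / aff_val gm (qq r)" for r
  define up where "up p = (if p \<in> Fr then y \<bullet> p else if p \<in> Zr then 0 else slope (ld p))" for p
  define u where "u = (\<Sum>p\<in>Basis. up p *\<^sub>R p)"
  have u: "u \<bullet> p = up p" if "p \<in> Basis" for p unfolding u_def by (rule inner_sum_Basis_scaleR[OF that])
  have ZrFr: "Zr \<inter> Fr = {}" using Zr Vr Fr by auto
  have Cl: "p \<in> Basis - Zr - Fr \<longleftrightarrow> p \<in> P \<and> v p \<noteq> 0 \<and> aff_val gm (qq p) \<noteq> 0" for p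
    using P Zr Vr Fr by auto
  have "(u, gm, lm) \<in> param_dom B qq Zr Vr Fr ld e"
    unfolding param_dom_def
  proof (clarsimp simp: gm lm, intro conjI)
    show "\<forall>p\<in>Zr. u \<bullet> p = 0"
    proof
      fix p assume "p \<in> Zr"
      then have "p \<in> Basis" "p \<notin> Fr" using P Zr ZrFr by auto
      then show "u \<bullet> p = 0" using u \<open>p \<in> Zr\<close> by (simp add: up_def)
    qed
    show "\<forall>p\<in>Basis - Zr - Fr. u \<bullet> p = u \<bullet> ld p"
      using ld u by (auto simp: up_def)
    show "\<forall>z\<in>Zr \<union> Vr. aff_val gm (qq z) = 0"
      using Zr Vr v P by (auto simp: zero_prod_def)
  qed
  moreover have "param_map qq Fr (u, gm, lm) = y"
  proof (rule euclidean_eqI)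
    fix p :: 'o assume pB: "p \<in> Basis"
    have pm: "param_map qq Fr (u, gm, lm) \<bullet> p
        = (if p \<in> Fr then up p else aff_val lm (qq p) + up p * aff_val gm (qq p))"
      by (simp add: param_map_inner[OF pB] u[OF pB])
    consider "p \<in> Fr" | "p \<in> Zr" | "p \<in> Basis - Zr - Fr" using pB by blast
    then show "param_map qq Fr (u, gm, lm) \<bullet> p = y \<bullet> p"
    proof cases
      case 1 then show ?thesis using pm by (simp add: up_def)
    next
      case 2
      then have "p \<notin> Fr" "v p = 0" using ZrFr Zr by auto
      then show ?thesis using pm 2 v[OF pB] by (simp add: up_def zero_prod_def)
    next
      case 3
      note ldp = ld[OF 3]
      have "v p \<noteq> 0" "aff_val gm (qq (ld p)) \<noteq> 0" using 3 ldp Cl by blast+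
      then have "D (\<kappa> p) \<noteq> 0" "parallel2 (v p) (D (\<kappa> p))" "parallel2 (v (ld p)) (D (\<kappa> p))"
        using cov 3 ldp Cl by metis+
      then have "parallel2 (v p) (v (ld p))" by (metis parallel2_trans)
      then have "(y \<bullet> p - aff_val lm (qq p)) * aff_val gm (qq (ld p))
          = aff_val gm (qq p) * (y \<bullet> ld p - aff_val lm (qq (ld p)))"
        using v pB ldp by (simp add: parallel2_def)
      with \<open>aff_val gm (qq (ld p)) \<noteq> 0\<close>
      have "aff_val lm (qq p) + slope (ld p) * aff_val gm (qq p) = y \<bullet> p"
        unfolding slope_def by (simp add: field_simps)
      then show ?thesis using pm 3 by (simp add: up_def)
    qed
  qed
  ultimately show ?thesis by (metis image_eqI)
qed

lemma pencil_cover_in_bad_at_nodes: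
  fixes qq :: "'o::euclidean_space \<Rightarrow> 'a::euclidean_space" and y :: 'o
  assumes B: "B \<subseteq> Basis" "e \<in> B" and P: "P \<subseteq> Basis"
    and v: "\<And>p. p \<in> Basis \<Longrightarrow> v p = (y \<bullet> p - aff_val lm (qq p), aff_val gm (qq p))"
    and cov: "\<And>p. p \<in> P \<Longrightarrow> v p = 0 \<or> (D (\<kappa> p) \<noteq> 0 \<and> parallel2 (v p) (D (\<kappa> p)))"
    and gm: "\<forall>b\<in>Basis - B. fst gm \<bullet> b = 0" "fst gm \<bullet> e = 1"
    and lm: "\<forall>b\<in>Basis - B. fst lm \<bullet> b = 0" "fst lm \<bullet> e = 0"
    and few: "card (\<kappa> ` {p\<in>P. v p \<noteq> 0}) + 2 * card B < card P + card {p\<in>P. v p = 0}"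
  shows "y \<in> bad_at_nodes B qq"
proof -
  define Zr where "Zr = {p\<in>P. v p = 0}"
  define Vr where "Vr = {p\<in>P. v p \<noteq> 0 \<and> aff_val gm (qq p) = 0}"
  define Fr where "Fr = Vr \<union> (Basis - P)"
  define Cl where "Cl = Basis - Zr - Fr"
  have finP: "finite P" using finite_subset[OF P finite_Basis] .
  have ClP: "Cl \<subseteq> {p\<in>P. v p \<noteq> 0}" using P unfolding Cl_def Zr_def Fr_def by auto
  obtain r where r: "\<And>p. p \<in> Cl \<Longrightarrow> r p \<in> Cl \<and> \<kappa> (r p) = \<kappa> p \<and> r (r p) = r p"
    and card_r: "card (r ` Cl) \<le> card (\<kappa> ` Cl)"
    using exists_class_retraction[of Cl \<kappa>] unfolding Cl_def by auto
  define ld where "ld = restrict (\<lambda>p. if p \<in> Cl then r p else p) Basis"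
  have ld: "ld p \<in> Cl \<and> \<kappa> (ld p) = \<kappa> p \<and> ld (ld p) = ld p" if "p \<in> Cl" for p
    using r[OF that] that unfolding ld_def Cl_def by auto
  have "ld \<in> Basis \<rightarrow>\<^sub>E Basis" using r unfolding ld_def Cl_def by auto
  have "card (ld ` Cl) \<le> card (\<kappa> ` {p\<in>P. v p \<noteq> 0})"
  proof -
    have "ld ` Cl = r ` Cl" unfolding ld_def Cl_def by auto
    moreover have "card (\<kappa> ` Cl) \<le> card (\<kappa> ` {p\<in>P. v p \<noteq> 0})"
      using ClP finP by (intro card_mono) auto
    ultimately show ?thesis using card_r by simp
  qed
  moreover have "card Fr = card Vr + (DIM('o) - card P)"
    unfolding Fr_def using card_Diff_subset[OF finP P] finP
    by (subst card_Un_disjoint) (auto simp: Vr_def)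
  moreover have "card (Zr \<union> Vr) = card Zr + card Vr"
    using finP by (intro card_Un_disjoint) (auto simp: Zr_def Vr_def)
  moreover have "card P \<le> DIM('o)" using card_mono[OF finite_Basis P] .
  ultimately have "card Fr + card (ld ` Cl) + 2 * card B < DIM('o) + card (Zr \<union> Vr)"
    using few unfolding Zr_def[symmetric] by linarith
  with \<open>ld \<in> Basis \<rightarrow>\<^sub>E Basis\<close> have "(Zr, Vr, Fr, ld, e) \<in> patterns B"
    using P B unfolding patterns_def Cl_def by (auto simp: Zr_def Vr_def Fr_def)
  moreover have "y \<in> param_map qq Fr ` param_dom B qq Zr Vr Fr ld e"
    by (rule pencil_cover_in_param_image[OF P v cov Zr_def Vr_def Fr_def ld[unfolded Cl_def] gm lm])
  ultimately show ?thesis unfolding bad_at_nodes_def by blast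
qed

section \<open>Generic sequences\<close>

definition pencil :: "'a::euclidean_space \<Rightarrow> real \<Rightarrow> 'a \<Rightarrow> real \<Rightarrow> 'a \<Rightarrow> real \<times> real" where
  "pencil a1 c1 a2 c2 x = (a1 \<bullet> x + c1, a2 \<bullet> x + c2)"

definition indep_on :: "'a::euclidean_space set \<Rightarrow> 'a \<Rightarrow> 'a \<Rightarrow> bool" where
  "indep_on B a1 a2 \<longleftrightarrow> (\<forall>l m. l \<noteq> 0 \<or> m \<noteq> 0 \<longrightarrow> (\<exists>b\<in>B. (l *\<^sub>R a1 + m *\<^sub>R a2) \<bullet> b \<noteq> 0))"

definition aff_general :: "'a::euclidean_space set \<Rightarrow> (nat \<Rightarrow> 'a) \<Rightarrow> bool" where
  "aff_general B q \<longleftrightarrow> (\<forall>Z c. finite Z \<longrightarrow> card Z \<le> card B + 1 \<longrightarrow> (\<Sum>z\<in>Z. c z *\<^sub>R (q z, 1::real)) = 0 \<longrightarrow> (\<forall>z\<in>Z. c z = 0))"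

definition fan_bounded :: "'a::euclidean_space set \<Rightarrow> (nat \<Rightarrow> 'a) \<Rightarrow> bool" where
  "fan_bounded B q \<longleftrightarrow> (\<forall>a1 c1 a2 c2 S D m. indep_on B a1 a2 \<longrightarrow> finite S \<longrightarrow>
     (\<forall>j\<in>S. pencil a1 c1 a2 c2 (q j) = 0 \<or> (\<exists>i<m. D i \<noteq> 0 \<and> parallel2 (pencil a1 c1 a2 c2 (q j)) (D i))) \<longrightarrow>
     card S \<le> m + 2 * card B - 2)"

definition good :: "'a::euclidean_space set \<Rightarrow> (nat \<Rightarrow> 'a) \<Rightarrow> bool" where
  "good B q \<longleftrightarrow> (\<forall>j. q j \<in> span B) \<and> aff_general B q \<and> fan_bounded B q"

definition node_maps :: "('o::euclidean_space \<Rightarrow> nat) set" where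
  "node_maps = {J \<in> Basis \<rightarrow>\<^sub>E UNIV. inj_on J Basis}"

definition bad_coeffs :: "('o::euclidean_space \<Rightarrow> nat) \<Rightarrow> 'a::euclidean_space set \<Rightarrow> (nat \<Rightarrow> 'a) \<Rightarrow> 'o set" where
  "bad_coeffs ix B q = (\<Union>J\<in>node_maps. node_values ix J -` bad_at_nodes B (q \<circ> J))"

lemma exists_node_map_covering:
  assumes "finite W" "card W \<le> DIM('o::euclidean_space)"
  shows "\<exists>J\<in>(node_maps :: ('o \<Rightarrow> nat) set). W \<subseteq> J ` Basis"
proof -
  have "infinite (UNIV - W :: nat set)" using assms(1) by (simp add: infinite_UNIV_nat Diff_infinite_finite)
  then obtain X where X: "finite X" "card X = DIM('o) - card W" "X \<subseteq> UNIV - W"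
    using infinite_arbitrarily_large by blast
  define W' where "W' = W \<union> X"
  have fW': "finite W'" using X(1) assms(1) by (simp add: W'_def)
  have cW': "card W' = DIM('o)" unfolding W'_def using X assms by (subst card_Un_disjoint) auto
  obtain h where h: "bij_betw h (Basis::'o set) W'"
    using finite_same_card_bij[of "Basis::'o set" W'] fW' cW' by auto
  define J where "J = restrict h Basis"
  have "J \<in> node_maps" unfolding node_maps_def J_def using h by (auto simp: bij_betw_def inj_on_def)
  moreover have "W \<subseteq> J ` Basis" using h unfolding J_def W'_def bij_betw_def by auto
  ultimately show ?thesis by blast
qed

lemma aff_general_reindex:
  assumes GP: "aff_general B q" and J: "inj_on J P"
    and P: "finite P" "card P \<le> card B + 1" and s: "(\<Sum>p\<in>P. c p *\<^sub>R (q (J p), 1::real)) = 0"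
  shows "\<forall>p\<in>P. c p = 0"
proof -
  define c' where "c' z = c (inv_into P J z)" for z
  have "(\<Sum>z\<in>J ` P. c' z *\<^sub>R (q z, 1::real)) = (\<Sum>p\<in>P. c' (J p) *\<^sub>R (q (J p), 1::real))"
    by (rule sum.reindex[OF J, unfolded comp_def])
  also have "\<dots> = (\<Sum>p\<in>P. c p *\<^sub>R (q (J p), 1::real))"
    by (rule sum.cong) (use J in \<open>auto simp: c'_def\<close>)
  finally have s': "(\<Sum>z\<in>J ` P. c' z *\<^sub>R (q z, 1::real)) = 0" using s by simp
  have "card (J ` P) \<le> card B + 1" using card_image[OF J] P by simp
  then have "\<forall>z\<in>J ` P. c' z = 0" using GP s' P(1) unfolding aff_general_def by blast
  then show ?thesis using J by (auto simp: c'_def)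
qed

lemma negligible_bad_coeffs:
  fixes ix :: "'o::euclidean_space \<Rightarrow> nat" and q :: "nat \<Rightarrow> 'a::euclidean_space"
  assumes B: "B \<subseteq> Basis" and G: "good B q"
    and ix: "inj_on ix Basis" "\<And>p. p \<in> Basis \<Longrightarrow> ix p < DIM('o)"
  shows "negligible (bad_coeffs ix B q)"
proof -
  have cJ: "countable (node_maps :: ('o \<Rightarrow> nat) set)"
  proof -
    have "countable ((Basis::'o set) \<rightarrow>\<^sub>E (UNIV::nat set))" by (rule countable_PiE) auto
    then show ?thesis unfolding node_maps_def by (rule countable_subset[rotated]) auto
  qed
  have "negligible (node_values ix J -` bad_at_nodes B (q \<circ> J))" if J: "J \<in> node_maps" for J
  proof (rule negligible_linear_preimage[OF linear_node_values])
    show "inj (node_values ix J)" using inj_node_values[OF ix] J unfolding node_maps_def by blast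
    show "negligible (bad_at_nodes B (q \<circ> J))"
    proof (rule negligible_bad_at_nodes[OF B])
      show "(q \<circ> J) p \<in> span B" for p using G unfolding good_def by simp
      fix P :: "'o set" and c assume P: "P \<subseteq> Basis" "card P \<le> card B + 1"
        and s: "(\<Sum>p\<in>P. c p *\<^sub>R ((q \<circ> J) p, 1::real)) = 0"
      have "inj_on J P" using J P(1) unfolding node_maps_def by (auto intro: inj_on_subset)
      moreover have "finite P" using finite_subset[OF P(1) finite_Basis] .
      ultimately show "\<forall>p\<in>P. c p = 0"
        using aff_general_reindex[of B q J P c] G P(2) s unfolding good_def by simp
    qed
  qed
  then show ?thesis unfolding bad_coeffs_def
    by (intro negligible_countable_Union) (auto intro: countable_image[OF cJ])
qed

lemma lifted_dependency_iff:
  fixes q :: "nat \<Rightarrow> 'a::euclidean_space"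
  assumes B: "B \<subseteq> Basis" and b0: "b0 \<in> Basis" "b0 \<notin> B" and qB: "\<And>j. q j \<in> span B"
  shows "(\<Sum>z\<in>Z. c z *\<^sub>R (q z + h z *\<^sub>R b0, 1::real)) = 0
     \<longleftrightarrow> (\<Sum>z\<in>Z. c z *\<^sub>R (q z, 1::real)) = 0 \<and> (\<Sum>z\<in>Z. c z * h z) = 0"
proof -
  have qb0: "q z \<bullet> b0 = 0" for z using inner_Basis_eq_0_if_in_span[OF B qB] b0 by blast
  have split: "(\<Sum>z\<in>Z. c z *\<^sub>R (q z + h z *\<^sub>R b0, 1::real))
      = (\<Sum>z\<in>Z. c z *\<^sub>R (q z, 1::real)) + (\<Sum>z\<in>Z. c z * h z) *\<^sub>R (b0, 0)"
    by (simp add: prod_eq_iff fst_sum snd_sum sum.distrib scaleR_sum_left algebra_simps)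
  have "((\<Sum>z\<in>Z. c z *\<^sub>R (q z, 1::real)) + (\<Sum>z\<in>Z. c z * h z) *\<^sub>R (b0, 0)) \<bullet> (b0, 0::real)
      = (\<Sum>z\<in>Z. c z * h z)"
    using b0(1) qb0 by (simp add: inner_add_left inner_sum_left inner_Pair)
  then show ?thesis unfolding split by (auto simp: zero_prod_def)
qed

lemma aff_general_lift:
  fixes q :: "nat \<Rightarrow> 'a::euclidean_space" and ix :: "'o::euclidean_space \<Rightarrow> nat"
  assumes B: "B \<subseteq> Basis" and b0: "b0 \<in> Basis" "b0 \<notin> B" and G: "good B q"
    and dimO: "card B + 2 \<le> DIM('o)" and Th: "\<Theta> \<notin> bad_coeffs ix B q"
    and q': "\<And>j. q' j = q j + poly_coord ix \<Theta> j *\<^sub>R b0"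
  shows "aff_general (insert b0 B) q'"
  unfolding aff_general_def
proof (intro allI impI)
  fix Z :: "nat set" and c assume Z: "finite Z" "card Z \<le> card (insert b0 B) + 1"
    and s: "(\<Sum>z\<in>Z. c z *\<^sub>R (q' z, 1::real)) = 0"
  have qB: "\<And>j. q j \<in> span B" and GPB: "aff_general B q" using G unfolding good_def by simp_all
  have "(\<Sum>z\<in>Z. c z *\<^sub>R (q z, 1::real)) = 0 \<and> (\<Sum>z\<in>Z. c z * poly_coord ix \<Theta> z) = 0"
    using s lifted_dependency_iff[of B b0 q, OF B b0 qB] unfolding q' by blast
  then have s1: "(\<Sum>z\<in>Z. c z *\<^sub>R (q z, 1::real)) = 0"
    and sh: "(\<Sum>z\<in>Z. c z * poly_coord ix \<Theta> z) = 0" by blast+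
  show "\<forall>z\<in>Z. c z = 0"
  proof (rule ccontr)
    assume c: "\<not> (\<forall>z\<in>Z. c z = 0)"
    have "card B + 1 < card Z" using c GPB Z(1) s1 unfolding aff_general_def by auto
    then have cZ: "card Z = card B + 2"
      using Z(2) b0(2) finite_subset[OF B finite_Basis] by simp
    then obtain J :: "'o \<Rightarrow> nat" where J: "J \<in> node_maps" "Z \<subseteq> J ` Basis"
      using exists_node_map_covering[OF Z(1)] dimO by auto
    define P where "P = {p\<in>Basis. J p \<in> Z}"
    have PB: "P \<subseteq> Basis" unfolding P_def by blast
    have JP: "J ` P = Z" unfolding P_def using J(2) by auto
    have injP: "inj_on J P" using J(1) unfolding node_maps_def P_def by (auto intro: inj_on_subset)
    have "node_values ix J \<Theta> \<in> dependency_hyperplane (q \<circ> J) P"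
    proof (rule in_dependency_hyperplane[OF PB, where l = "c \<circ> J"])
      show "\<forall>p\<in>P - {p0}. c' p = 0"
        if "p0 \<in> P" "(\<Sum>p\<in>P - {p0}. c' p *\<^sub>R ((q \<circ> J) p, 1::real)) = 0" for p0 c'
      proof (rule aff_general_reindex[OF GPB _ _ _ that(2)[unfolded comp_def]])
        show "inj_on J (P - {p0})" using injP by (rule inj_on_subset) blast
        show "finite (P - {p0})" using finite_subset[OF PB finite_Basis] by simp
        show "card (P - {p0}) \<le> card B + 1"
          using that(1) cZ card_image[OF injP] JP finite_subset[OF PB finite_Basis] by simp
      qed
      show "(\<Sum>p\<in>P. (c \<circ> J) p *\<^sub>R ((q \<circ> J) p, 1::real)) = 0"
        using s1 unfolding JP[symmetric] sum.reindex[OF injP] by simp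
      show "\<exists>p\<in>P. (c \<circ> J) p \<noteq> 0" using c JP by auto
      show "(\<Sum>p\<in>P. (c \<circ> J) p * (node_values ix J \<Theta> \<bullet> p)) = 0"
        using sh PB unfolding JP[symmetric] sum.reindex[OF injP] by (simp add: node_values_inner subset_eq)
    qed
    then have "node_values ix J \<Theta> \<in> bad_at_nodes B (q \<circ> J)"
      unfolding bad_at_nodes_def using PB cZ card_image[OF injP] JP by auto
    then show False using Th J(1) unfolding bad_coeffs_def by blast
  qed
qed

lemma pencil_lifted_point:
  assumes B: "B \<subseteq> Basis" and x: "x \<in> span B" and n1: "a1 \<bullet> b0 = 1" and n2: "a2 \<bullet> b0 = 0"
  shows "pencil a1 c1 a2 c2 (x + h *\<^sub>R b0)
    = (h - aff_val (- (\<Sum>b\<in>B. (a1 \<bullet> b) *\<^sub>R b), - c1) x, aff_val (\<Sum>b\<in>B. (a2 \<bullet> b) *\<^sub>R b, c2) x)"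
proof -
  have "a1 \<bullet> x = (\<Sum>b\<in>B. (a1 \<bullet> b) *\<^sub>R b) \<bullet> x" "a2 \<bullet> x = (\<Sum>b\<in>B. (a2 \<bullet> b) *\<^sub>R b) \<bullet> x"
    using inner_eq_inner_proj_if_in_span[OF B x] by blast+
  then show ?thesis unfolding pencil_def aff_val_def by (simp add: inner_add_right n1 n2)
qed

lemma fan_bounded_lift_core:
  fixes q :: "nat \<Rightarrow> 'a::euclidean_space" and ix :: "'o::euclidean_space \<Rightarrow> nat"
  assumes B: "B \<subseteq> Basis" and G: "good B q"
    and dimO: "4 * card B + 2 \<le> DIM('o)"
    and Th: "\<Theta> \<notin> bad_coeffs ix B q"
    and q': "\<And>j. q' j = q j + poly_coord ix \<Theta> j *\<^sub>R b0"
    and n1: "a1 \<bullet> b0 = 1" and n2: "a2 \<bullet> b0 = 0" and e: "e \<in> B" and n3: "a2 \<bullet> e = 1" and n4: "a1 \<bullet> e = 0"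
    and S: "finite S"
    and cov: "\<forall>j\<in>S. pencil a1 c1 a2 c2 (q' j) = 0 \<or> (\<exists>i<m. D i \<noteq> 0 \<and> parallel2 (pencil a1 c1 a2 c2 (q' j)) (D i))"
  shows "card S \<le> m + 2 * card B"
proof (rule ccontr)
  assume "\<not> ?thesis"
  then have cS: "card S \<ge> m + 2 * card B + 1" by linarith
  define h where "h = poly_coord ix \<Theta>"
  define gm where "gm = (\<Sum>b\<in>B. (a2 \<bullet> b) *\<^sub>R b, c2)"
  define lm where "lm = (- (\<Sum>b\<in>B. (a1 \<bullet> b) *\<^sub>R b), - c1)"
  define v where "v j = pencil a1 c1 a2 c2 (q' j)" for j
  have qB: "\<And>j. q j \<in> span B" using G unfolding good_def by simp
  have v_eq: "v j = (h j - aff_val lm (q j), aff_val gm (q j))" for j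
    unfolding v_def q' h_def gm_def lm_def by (rule pencil_lifted_point[OF B qB n1 n2])
  define K where "K = {j\<in>S. v j = 0}"
  define i where "i j = (SOME i. i < m \<and> D i \<noteq> 0 \<and> parallel2 (v j) (D i))" for j
  have iP: "i j < m \<and> D (i j) \<noteq> 0 \<and> parallel2 (v j) (D (i j))" if "j \<in> S - K" for j
  proof -
    have "\<exists>i. i < m \<and> D i \<noteq> 0 \<and> parallel2 (v j) (D i)" using cov that unfolding K_def v_def by auto
    then show ?thesis unfolding i_def by (rule someI_ex)
  qed
  have "i ` (S - K) \<subseteq> {..<m}" using iP by auto
  then have "card (i ` (S - K)) \<le> m" by (metis card_lessThan card_mono finite_lessThan)
  then have "card S \<ge> (2 * card B + 1) + card (i ` (S - K))" using cS by linarith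
  \<comment> \<open>a violation already occurs on at most 4|B| + 2 indices, which fit into the nodes\<close>
  then obtain W where W: "W \<subseteq> S" "card W \<le> 2 * (2 * card B + 1)"
      "card W \<ge> (2 * card B + 1) + card (i ` (W - K))"
    using exists_subset_card_excess[OF S] by blast
  have fW: "finite W" using finite_subset[OF W(1) S] .
  have "card W \<le> 4 * card B + 2" using W(2) by simp
  then have "card W \<le> DIM('o)" using dimO by linarith
  then obtain J :: "'o \<Rightarrow> nat" where J: "J \<in> node_maps" "W \<subseteq> J ` Basis"
    using exists_node_map_covering[OF fW] by blast
  define P where "P = {p\<in>Basis. J p \<in> W}"
  have injP: "inj_on J P" using J(1) unfolding node_maps_def P_def by (auto intro: inj_on_subset)
  have JP: "J ` P = W" "J ` {p\<in>P. (v \<circ> J) p = 0} = W \<inter> K" "J ` {p\<in>P. (v \<circ> J) p \<noteq> 0} = W - K"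
    using J(2) W(1) unfolding P_def K_def by auto
  have "node_values ix J \<Theta> \<in> bad_at_nodes B (q \<circ> J)"
  proof (rule pencil_cover_in_bad_at_nodes[where v = "v \<circ> J" and \<kappa> = "i \<circ> J" and D = D
        and P = P and lm = lm and gm = gm and e = e])
    show "B \<subseteq> Basis" "e \<in> B" "P \<subseteq> Basis" using B e unfolding P_def by auto
    show "(v \<circ> J) p = (node_values ix J \<Theta> \<bullet> p - aff_val lm ((q \<circ> J) p), aff_val gm ((q \<circ> J) p))"
      if "p \<in> Basis" for p
      using node_values_inner[OF that, of ix J \<Theta>] v_eq unfolding h_def by simp
    show "(v \<circ> J) p = 0 \<or> (D ((i \<circ> J) p) \<noteq> 0 \<and> parallel2 ((v \<circ> J) p) (D ((i \<circ> J) p)))"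
      if "p \<in> P" for p
      using that iP[of "J p"] W(1) unfolding P_def K_def by auto
    show "\<forall>b\<in>Basis - B. fst gm \<bullet> b = 0" "\<forall>b\<in>Basis - B. fst lm \<bullet> b = 0"
      unfolding gm_def lm_def using inner_proj_Basis[OF B] by simp_all
    show "fst gm \<bullet> e = 1" "fst lm \<bullet> e = 0"
      unfolding gm_def lm_def using inner_proj_Basis[OF B, of e] e B n3 n4 by auto
    have "(i \<circ> J) ` {p\<in>P. (v \<circ> J) p \<noteq> 0} = i ` (W - K)"
      unfolding image_comp[symmetric] JP(3) ..
    moreover have "card P = card W" using card_image[OF injP] JP(1) by simp
    moreover have "card {p\<in>P. (v \<circ> J) p = 0} = card (W \<inter> K)"
      unfolding JP(2)[symmetric] by (intro card_image[symmetric] inj_on_subset[OF injP]) auto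
    ultimately show "card ((i \<circ> J) ` {p\<in>P. (v \<circ> J) p \<noteq> 0}) + 2 * card B
        < card P + card {p\<in>P. (v \<circ> J) p = 0}"
      using W(3) by simp
  qed
  moreover have "node_values ix J \<Theta> \<notin> bad_at_nodes B (q \<circ> J)"
    using Th J(1) unfolding bad_coeffs_def by blast
  ultimately show False by contradiction
qed

lemma normalize_pencil:
  fixes a1 a2 b0 :: "'a::euclidean_space"
  assumes nd: "indep_on (insert b0 B) a1 a2" and nv: "a1 \<bullet> b0 \<noteq> 0 \<or> a2 \<bullet> b0 \<noteq> 0"
  shows "\<exists>A' B' C' D' e. A' * D' - B' * C' \<noteq> 0 \<and> e \<in> B \<and>
     (A' *\<^sub>R a1 + B' *\<^sub>R a2) \<bullet> b0 = 1 \<and> (C' *\<^sub>R a1 + D' *\<^sub>R a2) \<bullet> b0 = 0 \<and>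
     (C' *\<^sub>R a1 + D' *\<^sub>R a2) \<bullet> e = 1 \<and> (A' *\<^sub>R a1 + B' *\<^sub>R a2) \<bullet> e = 0"
proof -
  define x1 where "x1 = a1 \<bullet> b0"
  define x2 where "x2 = a2 \<bullet> b0"
  define n where "n = x1 * x1 + x2 * x2"
  have n0: "n \<noteq> 0" using nv unfolding n_def x1_def x2_def
    by (simp add: sum_squares_eq_zero_iff)
  have "- x2 \<noteq> 0 \<or> x1 \<noteq> 0" using nv unfolding x1_def x2_def by auto
  then have "\<exists>b\<in>insert b0 B. ((- x2) *\<^sub>R a1 + x1 *\<^sub>R a2) \<bullet> b \<noteq> 0"
    using nd unfolding indep_on_def by blast
  then obtain e where e: "e \<in> insert b0 B" "((- x2) *\<^sub>R a1 + x1 *\<^sub>R a2) \<bullet> e \<noteq> 0" by blast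
  have "((- x2) *\<^sub>R a1 + x1 *\<^sub>R a2) \<bullet> b0 = 0" unfolding x1_def x2_def by (simp add: inner_add_left inner_diff_left mult.commute)
  then have eB: "e \<in> B" using e by auto
  define y1 where "y1 = a1 \<bullet> e"
  define y2 where "y2 = a2 \<bullet> e"
  define be where "be = - x2 * y1 + x1 * y2"
  have be0: "be \<noteq> 0" using e(2) unfolding be_def y1_def y2_def by (simp add: inner_add_left inner_diff_left)
  define ka where "ka = (x1 / n) * y1 + (x2 / n) * y2"
  define A' where "A' = x1 / n + ka * x2 / be"
  define B' where "B' = x2 / n - ka * x1 / be"
  define C' where "C' = - x2 / be"
  define D' where "D' = x1 / be"
  have i1: "(A' *\<^sub>R a1 + B' *\<^sub>R a2) \<bullet> b0 = A' * x1 + B' * x2"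
    "(C' *\<^sub>R a1 + D' *\<^sub>R a2) \<bullet> b0 = C' * x1 + D' * x2"
    "(C' *\<^sub>R a1 + D' *\<^sub>R a2) \<bullet> e = C' * y1 + D' * y2"
    "(A' *\<^sub>R a1 + B' *\<^sub>R a2) \<bullet> e = A' * y1 + B' * y2"
    unfolding x1_def x2_def y1_def y2_def by (simp_all add: inner_add_left)
  have nn: "x1 * x1 + x2 * x2 = n" unfolding n_def ..
  have bb: "x2 * y1 - x1 * y2 = - be" unfolding be_def by simp
  have "A' * x1 + B' * x2 = (x1 * x1 + x2 * x2) / n"
    unfolding A'_def B'_def using n0 be0 by (simp add: field_simps)
  then have r1: "A' * x1 + B' * x2 = 1" using nn n0 by simp
  have r2: "C' * x1 + D' * x2 = 0" unfolding C'_def D'_def using be0 by (simp add: field_simps)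
  have "C' * y1 + D' * y2 = (- x2 * y1 + x1 * y2) / be" unfolding C'_def D'_def using be0 by (simp add: field_simps)
  then have r3: "C' * y1 + D' * y2 = 1" using be0 unfolding be_def by simp
  have "A' * y1 + B' * y2 = ka + ka * (x2 * y1 - x1 * y2) / be"
    unfolding A'_def B'_def ka_def using n0 be0 by (simp add: field_simps)
  then have r4: "A' * y1 + B' * y2 = 0" unfolding bb using be0 by simp
  have "A' * D' - B' * C' = (x1 * x1 + x2 * x2) / (n * be)"
    unfolding A'_def B'_def C'_def D'_def using n0 be0 by (simp add: field_simps)
  then have r5: "A' * D' - B' * C' \<noteq> 0" using nn n0 be0 by simp
  note r1 r2 r3 r4 r5
  then show ?thesis using i1 eB r1 r2 r3 r4 r5 by metis
qed

lemma pencil_mat2: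
  "pencil (A' *\<^sub>R a1 + B' *\<^sub>R a2) (A' * c1 + B' * c2) (C' *\<^sub>R a1 + D' *\<^sub>R a2) (C' * c1 + D' * c2) x
   = mat2_apply A' B' C' D' (pencil a1 c1 a2 c2 x)"
  by (simp add: pencil_def mat2_apply_def inner_add_left algebra_simps)

lemma indep_on_if_orthogonal:
  assumes "indep_on (insert b0 B) a1 a2" and "a1 \<bullet> b0 = 0" and "a2 \<bullet> b0 = 0"
  shows "indep_on B a1 a2"
  unfolding indep_on_def
proof (intro allI impI)
  fix l m :: real assume "l \<noteq> 0 \<or> m \<noteq> 0"
  then obtain b where b: "b \<in> insert b0 B" "(l *\<^sub>R a1 + m *\<^sub>R a2) \<bullet> b \<noteq> 0"
    using assms(1) unfolding indep_on_def by blast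
  have "(l *\<^sub>R a1 + m *\<^sub>R a2) \<bullet> b0 = 0" using assms(2,3) by (simp add: inner_add_left)
  then show "\<exists>b\<in>B. (l *\<^sub>R a1 + m *\<^sub>R a2) \<bullet> b \<noteq> 0" using b by auto
qed

lemma pencil_cover_mat2:
  assumes det: "Ap * Dp - Bp * Cp \<noteq> 0"
    and cov: "pencil a1 c1 a2 c2 x = 0 \<or> (\<exists>i<m. D i \<noteq> 0 \<and> parallel2 (pencil a1 c1 a2 c2 x) (D i))"
  shows "pencil (Ap *\<^sub>R a1 + Bp *\<^sub>R a2) (Ap * c1 + Bp * c2) (Cp *\<^sub>R a1 + Dp *\<^sub>R a2) (Cp * c1 + Dp * c2) x = 0
    \<or> (\<exists>i<m. mat2_apply Ap Bp Cp Dp (D i) \<noteq> 0 \<and>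
        parallel2 (pencil (Ap *\<^sub>R a1 + Bp *\<^sub>R a2) (Ap * c1 + Bp * c2) (Cp *\<^sub>R a1 + Dp *\<^sub>R a2) (Cp * c1 + Dp * c2) x)
          (mat2_apply Ap Bp Cp Dp (D i)))"
  using cov unfolding pencil_mat2 mat2_apply_eq_0_iff[OF det] parallel2_mat2_iff[OF det] .

lemma fan_bounded_lift:
  fixes q :: "nat \<Rightarrow> 'a::euclidean_space" and ix :: "'o::euclidean_space \<Rightarrow> nat"
  assumes B: "B \<subseteq> Basis" and b0: "b0 \<notin> B" and G: "good B q"
    and dimO: "4 * card B + 2 \<le> DIM('o)" and Th: "\<Theta> \<notin> bad_coeffs ix B q"
    and q': "\<And>j. q' j = q j + poly_coord ix \<Theta> j *\<^sub>R b0"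
  shows "fan_bounded (insert b0 B) q'"
  unfolding fan_bounded_def
proof (intro allI impI)
  fix a1 a2 :: 'a and c1 c2 :: real and S :: "nat set" and D :: "nat \<Rightarrow> real \<times> real" and m :: nat
  assume nd: "indep_on (insert b0 B) a1 a2" and S: "finite S"
    and cov: "\<forall>j\<in>S. pencil a1 c1 a2 c2 (q' j) = 0 \<or> (\<exists>i<m. D i \<noteq> 0 \<and> parallel2 (pencil a1 c1 a2 c2 (q' j)) (D i))"
  have "card S \<le> m + 2 * card B"
  proof (cases "a1 \<bullet> b0 = 0 \<and> a2 \<bullet> b0 = 0")
    case True
    then have same: "pencil a1 c1 a2 c2 (q' j) = pencil a1 c1 a2 c2 (q j)" for j
      by (simp add: pencil_def q' inner_add_right)
    have "fan_bounded B q" using G unfolding good_def by simp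
    moreover have "indep_on B a1 a2" using indep_on_if_orthogonal[OF nd] True by blast
    ultimately have "card S \<le> m + 2 * card B - 2"
      by (rule fan_bounded_def[THEN iffD1, rule_format, OF _ _ S]) (use cov same in auto)
    then show ?thesis by linarith
  next
    case False
    then have "a1 \<bullet> b0 \<noteq> 0 \<or> a2 \<bullet> b0 \<noteq> 0" by blast
    then obtain Ap Bp Cp Dp e where N: "Ap * Dp - Bp * Cp \<noteq> 0" "e \<in> B"
      "(Ap *\<^sub>R a1 + Bp *\<^sub>R a2) \<bullet> b0 = 1" "(Cp *\<^sub>R a1 + Dp *\<^sub>R a2) \<bullet> b0 = 0"
      "(Cp *\<^sub>R a1 + Dp *\<^sub>R a2) \<bullet> e = 1" "(Ap *\<^sub>R a1 + Bp *\<^sub>R a2) \<bullet> e = 0"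
      using normalize_pencil[OF nd \<open>a1 \<bullet> b0 \<noteq> 0 \<or> a2 \<bullet> b0 \<noteq> 0\<close>] by blast
    let ?P = "pencil (Ap *\<^sub>R a1 + Bp *\<^sub>R a2) (Ap * c1 + Bp * c2) (Cp *\<^sub>R a1 + Dp *\<^sub>R a2) (Cp * c1 + Dp * c2)"
    have "\<forall>j\<in>S. ?P (q' j) = 0 \<or>
        (\<exists>i<m. mat2_apply Ap Bp Cp Dp (D i) \<noteq> 0 \<and> parallel2 (?P (q' j)) (mat2_apply Ap Bp Cp Dp (D i)))"
      using cov pencil_cover_mat2[OF N(1)] by blast
    then show ?thesis by (rule fan_bounded_lift_core[OF B G dimO Th q' N(3) N(4) N(2) N(5) N(6) S])
  qed
  then show "card S \<le> m + 2 * card (insert b0 B) - 2"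
    using b0 finite_subset[OF B finite_Basis] by simp
qed

lemma good_lift:
  fixes q :: "nat \<Rightarrow> 'a::euclidean_space"
  assumes B: "B \<subseteq> Basis" and b0: "b0 \<in> Basis" "b0 \<notin> B" and G: "good B q"
  shows "\<exists>q'. good (insert b0 B) q'"
proof -
  have fB: "finite B" using finite_subset[OF B finite_Basis] .
  have "card (insert b0 B) \<le> card (Basis :: 'a set)" by (rule card_mono) (use B b0 in auto)
  then have cB: "card B + 1 \<le> DIM('a)" using fB b0 by simp
  have dimO: "4 * card B + 2 \<le> DIM('a \<times> 'a \<times> 'a \<times> 'a)" using cB by simp
  have dimO2: "card B + 2 \<le> DIM('a \<times> 'a \<times> 'a \<times> 'a)" using cB by simp
  obtain ix :: "'a \<times> 'a \<times> 'a \<times> 'a \<Rightarrow> nat" where ix: "bij_betw ix Basis {0..<card (Basis :: ('a \<times> 'a \<times> 'a \<times> 'a) set)}"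
    using ex_bij_betw_finite_nat[OF finite_Basis] by blast
  have ix1: "inj_on ix Basis" using ix by (simp add: bij_betw_def)
  have ix2: "\<And>p. p \<in> Basis \<Longrightarrow> ix p < DIM('a \<times> 'a \<times> 'a \<times> 'a)" using ix bij_betwE by fastforce
  have "negligible (bad_coeffs ix B q)" by (rule negligible_bad_coeffs[OF B G ix1 ix2])
  then have "\<exists>\<Theta>. \<Theta> \<notin> bad_coeffs ix B q"
  proof (rule contrapos_pp)
    assume "\<not> (\<exists>\<Theta>. \<Theta> \<notin> bad_coeffs ix B q)"
    then have "bad_coeffs ix B q = UNIV" by blast
    then show "\<not> negligible (bad_coeffs ix B q)" by simp
  qed
  then obtain \<Theta> where Th: "\<Theta> \<notin> bad_coeffs ix B q" by blast
  define q' where "q' j = q j + poly_coord ix \<Theta> j *\<^sub>R b0" for j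
  have q'eq: "\<And>j. q' j = q j + poly_coord ix \<Theta> j *\<^sub>R b0" by (simp add: q'_def)
  have sp: "\<forall>j. q' j \<in> span (insert b0 B)"
  proof
    fix j
    have "q j \<in> span (insert b0 B)" using G span_mono[of B "insert b0 B"] unfolding good_def by blast
    moreover have "poly_coord ix \<Theta> j *\<^sub>R b0 \<in> span (insert b0 B)" by (intro span_mul span_base) simp
    ultimately show "q' j \<in> span (insert b0 B)" unfolding q'_def by (rule span_add)
  qed
  have "aff_general (insert b0 B) q'" by (rule aff_general_lift[OF B b0 G dimO2 Th q'eq])
  moreover have "fan_bounded (insert b0 B) q'" by (rule fan_bounded_lift[OF B b0(2) G dimO Th q'eq])
  ultimately show ?thesis using sp unfolding good_def by blast
qed

lemma good_empty: "good {} (\<lambda>_. 0 :: 'a::euclidean_space)"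
  unfolding good_def
proof (intro conjI)
  show "\<forall>j. (0::'a) \<in> span {}" by simp
  show "aff_general {} (\<lambda>_. 0::'a)"
    unfolding aff_general_def
  proof (intro allI impI ballI)
    fix Z :: "nat set" and c z assume Z: "finite Z" "card Z \<le> card ({}::'a set) + 1"
      and s: "(\<Sum>z\<in>Z. c z *\<^sub>R (0::'a, 1::real)) = 0" and z: "z \<in> Z"
    have "card Z \<le> 1" using Z by simp
    then have "\<forall>a1\<in>Z. \<forall>a2\<in>Z. a1 = a2" using card_le_Suc0_iff_eq[OF Z(1)] by simp
    then have "Z = {z}" using z by blast
    then show "c z = 0" using s by (simp add: zero_prod_def)
  qed
  show "fan_bounded {} (\<lambda>_. 0::'a)" unfolding fan_bounded_def indep_on_def by auto
qed

lemma good_exists: "finite B \<Longrightarrow> B \<subseteq> Basis \<Longrightarrow> \<exists>q::nat \<Rightarrow> 'a::euclidean_space. good B q"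
proof (induction B rule: finite_induct)
  case empty then show ?case using good_empty by blast
next
  case (insert b0 B)
  then obtain q :: "nat \<Rightarrow> 'a" where "good B q" by blast
  then show ?case using good_lift[of B b0 q] insert by blast
qed

section \<open>Fans\<close>

lemma codim2_flat_nonempty:
  fixes F :: "'a::euclidean_space set"
  assumes "codim2_flat F" and "DIM('a) \<ge> 2"
  shows "F \<noteq> {}"
  using assms unfolding codim2_flat_def by auto

lemma indep_on_Basis_if_independent:
  assumes "independent {a1, a2}" and "a1 \<noteq> a2"
  shows "indep_on Basis a1 a2"
  unfolding indep_on_def
proof (intro allI impI)
  fix l m :: real assume lm: "l \<noteq> 0 \<or> m \<noteq> 0"
  have "l *\<^sub>R a1 + m *\<^sub>R a2 \<noteq> 0"
  proof
    assume h: "l *\<^sub>R a1 + m *\<^sub>R a2 = 0"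
    define c where "c v = (if v = a1 then l else m)" for v
    have "(\<Sum>v\<in>{a1, a2}. c v *\<^sub>R v) = l *\<^sub>R a1 + m *\<^sub>R a2" using assms(2) by (simp add: c_def)
    then have "\<forall>v\<in>{a1, a2}. c v = 0" using assms(1) h unfolding independent_explicit by simp
    then show False using lm assms(2) by (auto simp: c_def)
  qed
  then show "\<exists>b\<in>Basis. (l *\<^sub>R a1 + m *\<^sub>R a2) \<bullet> b \<noteq> 0" using euclidean_all_zero_iff by blast
qed

lemma codim2_flat_eq_pencil_zero:
  fixes F :: "'a::euclidean_space set"
  assumes cf: "codim2_flat F" and d: "DIM('a) \<ge> 2"
  obtains a1 c1 a2 c2 where "indep_on Basis a1 a2" "F = {x. pencil a1 c1 a2 c2 x = 0}"
proof -
  have aF: "affine F" and adF: "aff_dim F = int DIM('a) - 2" using cf unfolding codim2_flat_def by auto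
  obtain f0 where f0: "f0 \<in> F" using codim2_flat_nonempty[OF cf d] by blast
  define L where "L = (\<lambda>x. (- f0) + x) ` F"
  have subL: "subspace L" unfolding L_def by (rule affine_diffs_subspace[OF aF f0])
  have "aff_dim F = int (dim ((+) (- f0) ` F))" by (rule aff_dim_eq_dim) (use f0 in \<open>simp add: hull_inc\<close>)
  then have dL: "dim L + 2 = DIM('a)" using adF d unfolding L_def by linarith
  define Lp where "Lp = {y. \<forall>x\<in>L. orthogonal x y}"
  have "dim {y \<in> UNIV. \<forall>x\<in>L. orthogonal x y} + dim L = dim (UNIV :: 'a set)"
    by (rule dim_subspace_orthogonal_to_vectors) (use subL in auto)
  then have "dim Lp = 2" using dL unfolding Lp_def by simp
  moreover obtain Bs where Bs: "Bs \<subseteq> Lp" "independent Bs" "Lp \<subseteq> span Bs" "card Bs = dim Lp"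
    using basis_exists by blast
  ultimately obtain a1 a2 where a12: "Bs = {a1, a2}" "a1 \<noteq> a2" by (auto simp: card_2_iff)
  have "x \<in> F \<longleftrightarrow> a1 \<bullet> x - a1 \<bullet> f0 = 0 \<and> a2 \<bullet> x - a2 \<bullet> f0 = 0" for x
  proof -
    have "- f0 + x \<in> L \<longleftrightarrow> orthogonal (- f0 + x) a1 \<and> orthogonal (- f0 + x) a2"
    proof
      assume "- f0 + x \<in> L"
      then show "orthogonal (- f0 + x) a1 \<and> orthogonal (- f0 + x) a2" using Bs(1) a12 unfolding Lp_def by auto
    next
      assume va: "orthogonal (- f0 + x) a1 \<and> orthogonal (- f0 + x) a2"
      have "- f0 + x \<in> span L"
      proof (rule in_span_if_orthogonal_to_complement)
        fix z assume "\<And>w. w \<in> span L \<Longrightarrow> orthogonal z w"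
        then have "z \<in> Lp" unfolding Lp_def by (auto intro: span_base simp: orthogonal_commute)
        then have "z \<in> span {a1, a2}" using Bs(3) a12 by blast
        then show "orthogonal (- f0 + x) z" by (rule orthogonal_to_span) (use va in auto)
      qed
      then show "- f0 + x \<in> L" using subL span_eq_iff by blast
    qed
    moreover have "- f0 + x \<in> L \<longleftrightarrow> x \<in> F" unfolding L_def by auto
    ultimately show ?thesis by (simp add: orthogonal_def inner_diff_left inner_commute[of a1] inner_commute[of a2])
  qed
  then have "F = {x. pencil a1 (- (a1 \<bullet> f0)) a2 (- (a2 \<bullet> f0)) x = 0}"
    by (auto simp: pencil_def zero_prod_def)
  moreover have "indep_on Basis a1 a2" using indep_on_Basis_if_independent Bs(2) a12 by blast
  ultimately show thesis using that by blast
qed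

lemma hyperplane_through_pencil_zero:
  fixes F H :: "'a::euclidean_space set"
  assumes F: "F = {x. pencil a1 c1 a2 c2 x = 0}" and f0: "f0 \<in> F"
    and H: "hyperplane H" and FH: "F \<subseteq> H"
  obtains D where "D \<noteq> 0" and "\<And>x. x \<in> H \<Longrightarrow> parallel2 (pencil a1 c1 a2 c2 x) D"
proof -
  obtain a b where ab: "a \<noteq> 0" "H = {x. a \<bullet> x = b}" using H unfolding hyperplane_def by blast
  have f0e: "a1 \<bullet> f0 + c1 = 0" "a2 \<bullet> f0 + c2 = 0" using f0 F by (auto simp: pencil_def zero_prod_def)
  have af0: "a \<bullet> f0 = b" using f0 FH ab(2) by blast
  have "a \<in> span {a1, a2}"
  proof (rule in_span_if_orthogonal_to_complement)
    fix z assume z: "\<And>w. w \<in> span {a1, a2} \<Longrightarrow> orthogonal z w"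
    have "orthogonal z a1" "orthogonal z a2" using z by (auto intro: span_base)
    then have "f0 + z \<in> F" using f0e unfolding F
      by (simp add: pencil_def zero_prod_def orthogonal_def inner_add_right inner_commute)
    then have "a \<bullet> (f0 + z) = b" using FH ab(2) by blast
    then show "orthogonal a z" using af0 by (simp add: orthogonal_def inner_add_right)
  qed
  then obtain l where "a - l *\<^sub>R a1 \<in> span {a2}" using span_breakdown_eq[of a a1 "{a2}"] by blast
  then obtain m where "a - l *\<^sub>R a1 = m *\<^sub>R a2" by (auto simp: span_singleton)
  then have aeq: "a = l *\<^sub>R a1 + m *\<^sub>R a2" by (simp add: algebra_simps)
  have "(- m, l) \<noteq> 0" using ab(1) aeq by (auto simp: zero_prod_def)
  moreover have "parallel2 (pencil a1 c1 a2 c2 x) (- m, l)" if "x \<in> H" for x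
  proof -
    have "a \<bullet> x = a \<bullet> f0" using that ab(2) af0 by simp
    then have "l * (a1 \<bullet> x) + m * (a2 \<bullet> x) = l * (a1 \<bullet> f0) + m * (a2 \<bullet> f0)"
      unfolding aeq by (simp add: inner_add_left)
    moreover have "c1 = - (a1 \<bullet> f0)" "c2 = - (a2 \<bullet> f0)" using f0e by linarith+
    ultimately show ?thesis unfolding pencil_def parallel2_def by (simp add: algebra_simps)
  qed
  ultimately show thesis using that by blast
qed

lemma fan_union_in_pencil_lines:
  fixes H :: "nat \<Rightarrow> 'a::euclidean_space set"
  assumes d: "DIM('a) \<ge> 2" and fan: "is_fan m H"
  obtains a1 c1 a2 c2 D where "indep_on Basis a1 a2"
    and "\<And>i x. i < m \<Longrightarrow> x \<in> H i \<Longrightarrow> D i \<noteq> 0 \<and> parallel2 (pencil a1 c1 a2 c2 x) (D i)"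
proof -
  obtain F where F: "codim2_flat F" "\<forall>i<m. hyperplane (H i) \<and> F \<subseteq> H i"
    using fan unfolding is_fan_def by blast
  obtain a1 c1 a2 c2 where nd: "indep_on Basis a1 a2" and Feq: "F = {x. pencil a1 c1 a2 c2 x = 0}"
    by (rule codim2_flat_eq_pencil_zero[OF F(1) d])
  obtain f0 where f0: "f0 \<in> F" using codim2_flat_nonempty[OF F(1) d] by blast
  have "\<forall>i\<in>{..<m}. \<exists>D. D \<noteq> 0 \<and> (\<forall>x\<in>H i. parallel2 (pencil a1 c1 a2 c2 x) D)"
  proof
    fix i assume "i \<in> {..<m}"
    then obtain D where "D \<noteq> 0" "\<And>x. x \<in> H i \<Longrightarrow> parallel2 (pencil a1 c1 a2 c2 x) D"
      using hyperplane_through_pencil_zero[OF Feq f0, of "H i"] F(2) by blast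
    then show "\<exists>D. D \<noteq> 0 \<and> (\<forall>x\<in>H i. parallel2 (pencil a1 c1 a2 c2 x) D)" by blast
  qed
  from bchoice[OF this] obtain D
    where "\<forall>i\<in>{..<m}. D i \<noteq> 0 \<and> (\<forall>x\<in>H i. parallel2 (pencil a1 c1 a2 c2 x) (D i))"
    by blast
  then show thesis by (intro that[OF nd, of D]) auto
qed

lemma inj_if_aff_general:
  assumes "aff_general B q" and "B \<noteq> {}" and "finite B"
  shows "inj q"
proof (rule injI, rule ccontr)
  fix j j' assume jj: "q j = q j'" "j \<noteq> j'"
  have card: "card {j, j'} \<le> card B + 1" using jj(2) assms(2,3) by (simp add: Suc_leI card_gt_0_iff)
  have sum: "(\<Sum>z\<in>{j, j'}. (if z = j then 1 else -1) *\<^sub>R (q z, 1::real)) = 0"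
    using jj by (simp add: zero_prod_def)
  have "(if j = j then 1 else -1::real) = 0"
    by (rule assms(1)[unfolded aff_general_def, rule_format, OF _ card sum]) simp_all
  then show False by simp
qed

theorem lemma14:
  fixes m t :: nat
  assumes "DIM('a::euclidean_space) \<ge> 2"
    and "m > 0"
    and "t \<ge> 2 * DIM('a) + m - 1"
  shows "\<exists>T :: 'a set. finite T \<and> card T = t \<and>
           \<not> (\<exists>H. is_fan m H \<and> T \<subseteq> (\<Union>i<m. H i))"
proof -
  obtain q :: "nat \<Rightarrow> 'a" where G: "good Basis q" using good_exists[OF finite_Basis] by blast
  then have "inj q" using inj_if_aff_general[of Basis q] unfolding good_def by simp
  then have "card (q ` {..<t}) = t" by (simp add: card_image inj_on_subset)
  moreover have "\<not> (\<exists>H. is_fan m H \<and> q ` {..<t} \<subseteq> (\<Union>i<m. H i))"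
  proof
    assume "\<exists>H. is_fan m H \<and> q ` {..<t} \<subseteq> (\<Union>i<m. H i)"
    then obtain H where fan: "is_fan m H" and cov: "q ` {..<t} \<subseteq> (\<Union>i<m. H i)" by blast
    obtain a1 c1 a2 c2 D where nd: "indep_on Basis a1 a2"
      and lines: "\<And>i x. i < m \<Longrightarrow> x \<in> H i \<Longrightarrow> D i \<noteq> 0 \<and> parallel2 (pencil a1 c1 a2 c2 x) (D i)"
      using fan_union_in_pencil_lines[OF assms(1) fan] by metis
    have cv: "\<forall>j\<in>{..<t}. pencil a1 c1 a2 c2 (q j) = 0 \<or> (\<exists>i<m. D i \<noteq> 0 \<and> parallel2 (pencil a1 c1 a2 c2 (q j)) (D i))"
    proof
      fix j assume "j \<in> {..<t}"
      then obtain i where "i < m" "q j \<in> H i" using cov by blast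
      then show "pencil a1 c1 a2 c2 (q j) = 0 \<or> (\<exists>i<m. D i \<noteq> 0 \<and> parallel2 (pencil a1 c1 a2 c2 (q j)) (D i))"
        using lines by blast
    qed
    have "fan_bounded Basis q" using G unfolding good_def by simp
    then have "card {..<t} \<le> m + 2 * card (Basis :: 'a set) - 2"
      by (rule fan_bounded_def[THEN iffD1, rule_format, OF _ nd _ cv[rule_format]]) simp
    then show False using assms(1,3) by simp
  qed
  ultimately show ?thesis by blast
qed

end
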